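(* In the setting below, the map $\bar{\phi}\colon D(\mathcal{A})/D(\mathcal{A}')\to D(\widetilde{\mathcal{A}''})$ is a quasi-isomorphism: it commutes with the differentials, lowers degrees by $2\operatorname{codim}x_0-1$, and induces an isomorphism in cohomology.
   Context: A complex subspace arrangement in $\mathbb{C}^l$ is a finite set of complex linear subspaces of $\mathbb{C}^l$ with no two distinct members $x\subset y$. For a finite set $\mathcal{C}$ of linear subspaces of a complex vector space $W$ with a linear order, $D(\mathcal{C})$ is the cochain complex over $\mathbb{Q}$ with basis all subsets $\sigma\subseteq\mathcal{C}$, where with $\vee\sigma=\bigcap_{x\in\sigma}x$ ($\vee\emptyset=W$), $\deg\sigma=2\operatorname{codim}_W(\vee\sigma)-|\sigma|$ and for $\sigma=\{x_{i_1},\dots,x_{i_r}\}$ in increasing order, $d\sigma=\sum_{j:\vee(\sigma\setminus\{x_{i_j}\})=\vee\sigma}(-1)^j(\sigma\setminus\{x_{i_j}\})$. Setting: $\mathcal{A}=\{x_0,\dots,x_n\}$ is a complex subspace arrangement in $\mathbb{C}^l$, $\mathcal{A}'=\mathcal{A}\setminus\{x_0\}$; on $\mathcal{A}'$, $y\sim z$ iff $x_0\cap y=x_0\cap z$, with classes $\mathcal{A}_1,\dots,\mathcal{A}_r$; the linear order is $x_0<x_1<\dots<x_n$ with elements of $\mathcal{A}_i$ preceding elements of $\mathcal{A}_j$ whenever $i<j$. $D(\mathcal{A}')$ is the subcomplex of $D(\mathcal{A})$ spanned by subsets not containing $x_0$. $\widetilde{\mathcal{A}''}=\{x_0\cap y\mid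 y\in\mathcal{A}'\}$, ordered by the order of the corresponding classes, and $D(\widetilde{\mathcal{A}''})$ is formed with ambient space $W=x_0$ (codimensions taken in $x_0$). $E=\{(y,z)\in\mathcal{A}'\times\mathcal{A}'\mid y\sim z,\ y\ne z\}$. The linear map $\phi\colon D(\mathcal{A})\to D(\widetilde{\mathcal{A}''})$ is: $\phi(\sigma)=0$ if $x_0\notin\sigma$ or if $x_0\in\sigma$ and $\{y,z\}\subseteq\sigma$ for some $(y,z)\in E$; otherwise, for $\sigma=\{x_0,x_{i_1},\dots,x_{i_r}\}$, $\phi(\sigma)=(-1)^r\{x_0\cap x_{i_1},\dots,x_0\cap x_{i_r}\}$. It vanishes on $D(\mathcal{A}')$ and $\bar\phi$ is the induced map on $D(\mathcal{A})/D(\mathcal{A}')$. $\operatorname{codim}x_0$ is the complex codimension of $x_0$ in $\mathbb{C}^l$. *)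

theory Defs
  imports "HOL-Analysis.Analysis"
begin

type_synonym 'n csub = "(complex ^ 'n) set"

definition csubspace :: "'n::finite csub \<Rightarrow> bool" where
  "csubspace x \<longleftrightarrow> vec.subspace x"

definition ccodim :: "'n::finite csub \<Rightarrow> 'n csub \<Rightarrow> nat" where
  "ccodim W x = vec.dim W - vec.dim x"

definition is_arrangement :: "'n::finite csub set \<Rightarrow> bool" where
  "is_arrangement A \<longleftrightarrow> finite A \<and> (\<forall>x\<in>A. csubspace x) \<and>
     (\<forall>x\<in>A. \<forall>y\<in>A. x \<subseteq> y \<longrightarrow> x = y)"

definition join :: "'n::finite csub \<Rightarrow> 'n csub set \<Rightarrow> 'n csub" where
  "join W \<sigma> = W \<inter> \<Inter>\<sigma>"

definition sdeg :: "'n::finite csub \<Rightarrow> 'n csub set \<Rightarrow> int" where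
  "sdeg W \<sigma> = 2 * int (ccodim W (join W \<sigma>)) - int (card \<sigma>)"

text \<open>The ordered finite set C is given by a distinct list L (order = list position).
  Position (starting at 1) of x within sigma, listed in increasing order.\<close>
definition lless :: "'a list \<Rightarrow> 'a \<Rightarrow> 'a \<Rightarrow> bool" where
  "lless L y x \<longleftrightarrow> (\<exists>i j. i < j \<and> j < length L \<and> L ! i = y \<and> L ! j = x)"

definition spos :: "'a list \<Rightarrow> 'a set \<Rightarrow> 'a \<Rightarrow> nat" where
  "spos L \<sigma> x = Suc (card {y\<in>\<sigma>. lless L y x})"

definition dcoef :: "'n::finite csub list \<Rightarrow> 'n csub \<Rightarrow> 'n csub set \<Rightarrow> 'n csub set \<Rightarrow> rat" where
  "dcoef L W \<sigma> \<tau> = (\<Sum>x\<in>\<sigma>. if \<tau> = \<sigma> - {x} \<and> join W (\<sigma> - {x}) = join W \<sigma>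
                            then (-1) ^ spos L \<sigma> x else 0)"

text \<open>Cochains of D(C): rational linear combinations of subsets of C,
  represented by their coefficient functions.\<close>
definition cochains :: "'a set \<Rightarrow> ('a set \<Rightarrow> rat) set" where
  "cochains C = {c. \<forall>\<sigma>. c \<sigma> \<noteq> 0 \<longrightarrow> \<sigma> \<subseteq> C}"

definition hcochains :: "'n::finite csub \<Rightarrow> 'n csub set \<Rightarrow> int \<Rightarrow> ('n csub set \<Rightarrow> rat) set" where
  "hcochains W C k = {c \<in> cochains C. \<forall>\<sigma>. c \<sigma> \<noteq> 0 \<longrightarrow> sdeg W \<sigma> = k}"

definition dif :: "'n::finite csub list \<Rightarrow> 'n csub \<Rightarrow> ('n csub set \<Rightarrow> rat) \<Rightarrow> ('n csub set \<Rightarrow> rat)" where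
  "dif L W c = (\<lambda>\<tau>. \<Sum>\<sigma>\<in>Pow (set L). c \<sigma> * dcoef L W \<sigma> \<tau>)"

definition sim :: "'n::finite csub \<Rightarrow> 'n csub \<Rightarrow> 'n csub \<Rightarrow> bool" where
  "sim x0 y z \<longleftrightarrow> x0 \<inter> y = x0 \<inter> z"

text \<open>The ordered set tilde A'': intersections with x0, in the order of the classes
  (under the contiguity hypothesis on L, list order of first occurrences).\<close>
definition tA2 :: "'n::finite csub list \<Rightarrow> 'n csub list" where
  "tA2 L = remdups (map (\<lambda>y. hd L \<inter> y) (tl L))"

definition phicoef :: "'n::finite csub list \<Rightarrow> 'n csub set \<Rightarrow> 'n csub set \<Rightarrow> rat" where
  "phicoef L \<sigma> \<tau> =
     (if hd L \<in> \<sigma> \<and> \<not> (\<exists>y\<in>\<sigma> - {hd L}. \<exists>z\<in>\<sigma> - {hd L}. y \<noteq> z \<and> sim (hd L) y z)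
         \<and> \<tau> = (\<lambda>y. hd L \<inter> y) ` (\<sigma> - {hd L})
      then (-1) ^ (card \<sigma> - 1) else 0)"

definition phi :: "'n::finite csub list \<Rightarrow> ('n csub set \<Rightarrow> rat) \<Rightarrow> ('n csub set \<Rightarrow> rat)" where
  "phi L c = (\<lambda>\<tau>. \<Sum>\<sigma>\<in>Pow (set L). c \<sigma> * phicoef L \<sigma> \<tau>)"

end

theory Submission
  imports Defs
begin

text \<open>
  The quotient \<open>D(\<A>)/D(\<A>')\<close> is identified with the span of the simplices containing \<open>x\<^sub>0\<close>.
  For a class \<open>u\<close> of \<open>\<sim>\<close>, adding the first element of \<open>u\<close> to each simplex that meets \<open>u\<close> but
  misses that element is a chain homotopy between the identity and the map that replaces the
  member of \<open>u\<close> by the first element (and kills simplices with two members of \<open>u\<close>); because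
  the classes are contiguous in the order, the first element sits directly before the member it
  replaces, which makes the signs cancel.  Composing over all classes retracts the quotient onto
  the subcomplex of simplices made of \<open>x\<^sub>0\<close> and first elements of distinct classes, and \<open>\<phi>\<close>
  maps this subcomplex isomorphically onto \<open>D(\<A>'')\<close>.  The degree drops by \<open>2 codim x\<^sub>0 - 1\<close>
  because codimensions are then measured inside \<open>x\<^sub>0\<close> and \<open>x\<^sub>0\<close> itself is dropped.
\<close>

lemma lless_nth_iff:
  assumes "distinct xs" "i < length xs" "j < length xs"
  shows "lless xs (xs ! i) (xs ! j) \<longleftrightarrow> i < j"
proof
  assume "lless xs (xs ! i) (xs ! j)"
  then obtain i' j' where "i' < j'" "j' < length xs" "xs ! i' = xs ! i" "xs ! j' = xs ! j"
    unfolding lless_def by blast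
  with assms show "i < j" by (simp add: nth_eq_iff_index_eq)
qed (use assms in \<open>auto simp: lless_def\<close>)

lemma lless_in_set: "lless xs a b \<Longrightarrow> a \<in> set xs \<and> b \<in> set xs"
  unfolding lless_def by auto

lemma lless_irrefl: "distinct xs \<Longrightarrow> \<not> lless xs a a"
  unfolding lless_def by (auto simp: nth_eq_iff_index_eq)

lemma lless_asym: "distinct xs \<Longrightarrow> lless xs a b \<Longrightarrow> \<not> lless xs b a"
  unfolding lless_def by (auto simp: nth_eq_iff_index_eq)

lemma lless_trans: "distinct xs \<Longrightarrow> lless xs a b \<Longrightarrow> lless xs b c \<Longrightarrow> lless xs a c"
proof -
  assume d: "distinct xs" and "lless xs a b" "lless xs b c"
  then obtain i j k l where "i < j" "j < length xs" "xs ! i = a" "xs ! j = b"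
    and "k < l" "l < length xs" "xs ! k = b" "xs ! l = c"
    unfolding lless_def by blast
  moreover from this d have "j = k" using nth_eq_iff_index_eq[of xs j k] by auto
  ultimately show ?thesis unfolding lless_def by (intro exI[of _ i] exI[of _ l]) simp
qed

lemma lless_total:
  "distinct xs \<Longrightarrow> a \<in> set xs \<Longrightarrow> b \<in> set xs \<Longrightarrow> a \<noteq> b \<Longrightarrow> lless xs a b \<or> lless xs b a"
proof -
  assume d: "distinct xs" and "a \<in> set xs" "b \<in> set xs" "a \<noteq> b"
  then obtain i j where "i < length xs" "j < length xs" "a = xs ! i" "b = xs ! j" "i \<noteq> j"
    by (metis in_set_conv_nth)
  then show ?thesis using lless_nth_iff[OF d] by (metis nat_neq_iff)
qed

lemma lless_Cons: "lless (x # xs) a b \<longleftrightarrow> (a = x \<and> b \<in> set xs) \<or> lless xs a b"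
proof
  assume "lless (x # xs) a b"
  then obtain i j where ij: "i < j" "j < length (x # xs)" "(x # xs) ! i = a" "(x # xs) ! j = b"
    unfolding lless_def by blast
  then obtain j' where j': "j = Suc j'" by (cases j) auto
  show "(a = x \<and> b \<in> set xs) \<or> lless xs a b"
  proof (cases i)
    case 0
    thus ?thesis using ij j' by auto
  next
    case (Suc i')
    hence "i' < j'" "j' < length xs" "xs ! i' = a" "xs ! j' = b" using ij j' by auto
    thus ?thesis unfolding lless_def by blast
  qed
next
  assume "(a = x \<and> b \<in> set xs) \<or> lless xs a b"
  then show "lless (x # xs) a b"
  proof
    assume "a = x \<and> b \<in> set xs"
    then obtain j where "j < length xs" "xs ! j = b" "a = x" by (auto simp: in_set_conv_nth)
    hence "0 < Suc j \<and> Suc j < length (x # xs) \<and> (x # xs) ! 0 = a \<and> (x # xs) ! Suc j = b" by simp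
    thus ?thesis unfolding lless_def by blast
  next
    assume "lless xs a b"
    then obtain i j where "i < j" "j < length xs" "xs ! i = a" "xs ! j = b"
      unfolding lless_def by blast
    hence "Suc i < Suc j \<and> Suc j < length (x # xs) \<and> (x # xs) ! Suc i = a \<and> (x # xs) ! Suc j = b"
      by simp
    thus ?thesis unfolding lless_def by blast
  qed
qed

lemma lless_append: "a \<in> set p \<Longrightarrow> b \<in> set q \<Longrightarrow> lless (p @ q) a b"
proof -
  assume "a \<in> set p" "b \<in> set q"
  then obtain i j where "i < length p" "p ! i = a" "j < length q" "q ! j = b"
    by (auto simp: in_set_conv_nth)
  then show ?thesis unfolding lless_def
    by (intro exI[of _ i] exI[of _ "length p + j"]) (auto simp: nth_append)
qed

lemma remdups_append_split:
  "remdups (xs @ ys) = remdups (filter (\<lambda>a. a \<notin> set ys) xs) @ remdups ys"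
  by (induction xs) auto

text \<open>\<open>linmap V M\<close> is the linear map whose matrix entry \<open>M \<sigma> \<tau>\<close> is the coefficient of \<open>\<tau>\<close> in
  the image of \<open>\<sigma>\<close>; the differential and \<open>\<phi>\<close> are of this form.\<close>

definition linmap :: "'a set \<Rightarrow> ('a set \<Rightarrow> 'a set \<Rightarrow> rat) \<Rightarrow> ('a set \<Rightarrow> rat) \<Rightarrow> ('a set \<Rightarrow> rat)" where
  "linmap V M c = (\<lambda>\<tau>. \<Sum>\<sigma>\<in>Pow V. c \<sigma> * M \<sigma> \<tau>)"

lemma dif_linmap: "dif L W c = linmap (set L) (dcoef L W) c"
  by (simp add: dif_def linmap_def)

lemma phi_linmap: "phi L c = linmap (set L) (phicoef L) c"
  by (simp add: phi_def linmap_def)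

lemma linmap_comp:
  "linmap V N (linmap V' M c) = linmap V' (\<lambda>\<sigma> \<tau>. \<Sum>\<rho>\<in>Pow V. M \<sigma> \<rho> * N \<rho> \<tau>) c"
proof (rule ext)
  fix \<tau>
  have "linmap V N (linmap V' M c) \<tau> = (\<Sum>\<rho>\<in>Pow V. \<Sum>\<sigma>\<in>Pow V'. c \<sigma> * M \<sigma> \<rho> * N \<rho> \<tau>)"
    by (simp add: linmap_def sum_distrib_right)
  also have "\<dots> = (\<Sum>\<sigma>\<in>Pow V'. \<Sum>\<rho>\<in>Pow V. c \<sigma> * M \<sigma> \<rho> * N \<rho> \<tau>)"
    by (rule sum.swap)
  also have "\<dots> = linmap V' (\<lambda>\<sigma> \<tau>. \<Sum>\<rho>\<in>Pow V. M \<sigma> \<rho> * N \<rho> \<tau>) c \<tau>"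
    by (simp add: linmap_def sum_distrib_left mult.assoc)
  finally show "linmap V N (linmap V' M c) \<tau> = linmap V' (\<lambda>\<sigma> \<tau>. \<Sum>\<rho>\<in>Pow V. M \<sigma> \<rho> * N \<rho> \<tau>) c \<tau>" .
qed

lemma linmap_add: "linmap V M (\<lambda>x. a x + b x) = (\<lambda>\<tau>. linmap V M a \<tau> + linmap V M b \<tau>)"
  by (simp add: linmap_def distrib_right sum.distrib)

lemma linmap_diff: "linmap V M (\<lambda>x. a x - b x) = (\<lambda>\<tau>. linmap V M a \<tau> - linmap V M b \<tau>)"
  by (simp add: linmap_def left_diff_distrib sum_subtractf)

lemma linmap_zero: "linmap V M (\<lambda>_. 0) = (\<lambda>_. 0)"
  by (simp add: linmap_def)

lemma linmap_add_matrix: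
  "linmap V (\<lambda>\<sigma> \<tau>. M \<sigma> \<tau> + N \<sigma> \<tau>) c = (\<lambda>\<tau>. linmap V M c \<tau> + linmap V N c \<tau>)"
  by (simp add: linmap_def distrib_left sum.distrib)

lemma linmap_cong:
  "(\<And>\<sigma>. \<sigma> \<subseteq> V \<Longrightarrow> c \<sigma> \<noteq> 0 \<Longrightarrow> M \<sigma> \<tau> = N \<sigma> \<tau>) \<Longrightarrow> linmap V M c \<tau> = linmap V N c \<tau>"
  unfolding linmap_def by (rule sum.cong) auto

lemma linmap_id:
  assumes "finite V" "\<And>\<sigma>. c \<sigma> \<noteq> 0 \<Longrightarrow> \<sigma> \<subseteq> V"
  shows "linmap V (\<lambda>\<sigma> \<tau>. if \<tau> = \<sigma> then 1 else 0) c \<tau> = c \<tau>"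
proof (cases "\<tau> \<subseteq> V")
  case True
  thus ?thesis unfolding linmap_def using assms(1)
    by (simp add: if_distrib[of "\<lambda>x. _ * x"] sum.delta' cong: if_cong)
next
  case False
  hence "c \<tau> = 0" using assms(2) by blast
  thus ?thesis unfolding linmap_def using False by (auto intro!: sum.neutral)
qed

lemma linmap_id_diff:
  assumes "finite V" "\<And>\<sigma>. c \<sigma> \<noteq> 0 \<Longrightarrow> \<sigma> \<subseteq> V"
  shows "linmap V (\<lambda>\<sigma> \<tau>. (if \<tau> = \<sigma> then 1 else 0) - M \<sigma> \<tau>) c = (\<lambda>\<tau>. c \<tau> - linmap V M c \<tau>)"
proof
  fix \<tau>
  have "linmap V (\<lambda>\<sigma> \<tau>. (if \<tau> = \<sigma> then 1 else 0) - M \<sigma> \<tau>) c \<tau> =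
      linmap V (\<lambda>\<sigma> \<tau>. if \<tau> = \<sigma> then 1 else 0) c \<tau> - linmap V M c \<tau>"
    by (simp add: linmap_def right_diff_distrib sum_subtractf)
  then show "linmap V (\<lambda>\<sigma> \<tau>. (if \<tau> = \<sigma> then 1 else 0) - M \<sigma> \<tau>) c \<tau> = c \<tau> - linmap V M c \<tau>"
    using linmap_id[OF assms] by simp
qed

lemma linmap_nonzeroD: "linmap V M c \<tau> \<noteq> 0 \<Longrightarrow> \<exists>\<sigma>. \<sigma> \<subseteq> V \<and> c \<sigma> \<noteq> 0 \<and> M \<sigma> \<tau> \<noteq> 0"
  unfolding linmap_def by (force intro: sum.neutral)

lemma image_eq_self: "(\<And>y. y \<in> S \<Longrightarrow> f y = y) \<Longrightarrow> f ` S = S"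
  by force

lemma sum_eq_single:
  "finite S \<Longrightarrow> a \<in> S \<Longrightarrow> (\<And>x. x \<in> S \<Longrightarrow> x \<noteq> a \<Longrightarrow> g x = 0) \<Longrightarrow> sum g S = g a"
  using sum.mono_neutral_right[of S "{a}" g] by auto

lemma sum_involution_zero:
  assumes "finite S" "\<And>p. p \<in> S \<Longrightarrow> i p \<in> S" "\<And>p. p \<in> S \<Longrightarrow> i (i p) = p"
    "\<And>p. p \<in> S \<Longrightarrow> F (i p) = - F p"
  shows "sum F S = (0::rat)"
proof -
  have "sum F S = sum (\<lambda>p. F (i p)) S"
    by (rule sum.reindex_bij_witness[of _ i i]) (use assms in auto)
  also have "\<dots> = - sum F S" using assms(4) by (simp add: sum_negf)
  finally show ?thesis by simp
qed

lemma mult_if_zero: "a * (if P then b else 0) = (if P then a * b else (0::'a::mult_zero))"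
  by simp

lemma minus_one_power_odd: "odd (m + n) \<Longrightarrow> (-1::rat) ^ m + (-1) ^ n = 0"
  by (auto simp: odd_add neg_one_even_power neg_one_odd_power)

section \<open>The complex \<open>D(\<C>)\<close>\<close>

lemma join_antimono: "S \<subseteq> S' \<Longrightarrow> join W S' \<subseteq> join W S"
  unfolding join_def by auto

lemma dcoef_sum:
  assumes "\<sigma> \<subseteq> set L"
  shows "(\<Sum>\<rho>\<in>Pow (set L). dcoef L W \<sigma> \<rho> * g \<rho>) =
    (\<Sum>x\<in>\<sigma>. if join W (\<sigma> - {x}) = join W \<sigma> then (-1) ^ spos L \<sigma> x * g (\<sigma> - {x}) else 0)"
proof -
  have "(\<Sum>\<rho>\<in>Pow (set L). dcoef L W \<sigma> \<rho> * g \<rho>) =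
     (\<Sum>x\<in>\<sigma>. \<Sum>\<rho>\<in>Pow (set L). (if \<rho> = \<sigma> - {x} \<and> join W (\<sigma> - {x}) = join W \<sigma>
                            then (-1) ^ spos L \<sigma> x else 0) * g \<rho>)"
    unfolding dcoef_def sum_distrib_right by (rule sum.swap)
  also have "\<dots> = (\<Sum>x\<in>\<sigma>. if join W (\<sigma> - {x}) = join W \<sigma> then (-1) ^ spos L \<sigma> x * g (\<sigma> - {x}) else 0)"
  proof (rule sum.cong[OF refl])
    fix x assume "x \<in> \<sigma>"
    have "\<sigma> - {x} \<in> Pow (set L)" using assms by auto
    then show "(\<Sum>\<rho>\<in>Pow (set L). (if \<rho> = \<sigma> - {x} \<and> join W (\<sigma> - {x}) = join W \<sigma>
                            then (-1) ^ spos L \<sigma> x else 0) * g \<rho>) =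
       (if join W (\<sigma> - {x}) = join W \<sigma> then (-1) ^ spos L \<sigma> x * g (\<sigma> - {x}) else 0)"
      by (subst sum_eq_single) auto
  qed
  finally show ?thesis .
qed

lemma spos_remove:
  assumes "finite \<sigma>" "x \<in> \<sigma>"
  shows "spos L (\<sigma> - {x}) y = (if lless L x y then spos L \<sigma> y - 1 else spos L \<sigma> y)"
    and "lless L x y \<Longrightarrow> spos L \<sigma> y \<ge> 2"
proof -
  have e: "{z\<in>\<sigma> - {x}. lless L z y} = {z\<in>\<sigma>. lless L z y} - {x}" by auto
  have f: "finite {z\<in>\<sigma>. lless L z y}" using assms by auto
  have c1: "card {z\<in>\<sigma>. lless L z y} \<ge> 1" if "lless L x y"
  proof -
    have "x \<in> {z\<in>\<sigma>. lless L z y}" using assms that by auto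
    thus ?thesis using f by (simp add: Suc_le_eq card_gt_0_iff) blast
  qed
  show "spos L (\<sigma> - {x}) y = (if lless L x y then spos L \<sigma> y - 1 else spos L \<sigma> y)"
  proof (cases "lless L x y")
    case True
    have "x \<in> {z\<in>\<sigma>. lless L z y}" using assms True by auto
    thus ?thesis unfolding spos_def e using f c1[OF True] True by (simp add: card_Diff_singleton_if)
  next
    case False
    hence "x \<notin> {z\<in>\<sigma>. lless L z y}" by auto
    thus ?thesis unfolding spos_def e using False by simp
  qed
  show "lless L x y \<Longrightarrow> spos L \<sigma> y \<ge> 2"
    using c1 unfolding spos_def by simp
qed

lemma spos_insert:
  assumes "finite \<sigma>" "f \<notin> \<sigma>"
  shows "spos L (insert f \<sigma>) x = spos L \<sigma> x + (if lless L f x then 1 else 0)"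
proof -
  have "{z \<in> insert f \<sigma>. lless L z x} =
      (if lless L f x then insert f {z\<in>\<sigma>. lless L z x} else {z\<in>\<sigma>. lless L z x})"
    by auto
  thus ?thesis unfolding spos_def using assms by auto
qed

lemma spos_remove_sign:
  assumes d: "distinct L" and fin: "finite \<sigma>" and xy: "x \<in> \<sigma>" "y \<in> \<sigma>" "x \<noteq> y"
    and xyL: "x \<in> set L" "y \<in> set L"
  shows "(-1::rat) ^ spos L \<sigma> y * (-1) ^ spos L (\<sigma> - {y}) x =
    - ((-1) ^ spos L \<sigma> x * (-1) ^ spos L (\<sigma> - {x}) y)"
proof (cases "lless L x y")
  case True
  hence ny: "\<not> lless L y x" using lless_asym[OF d] by blast
  have "spos L \<sigma> y \<ge> 2" using spos_remove(2)[OF fin xy(1) True] .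
  then obtain m where m: "spos L \<sigma> y = Suc m" by (cases "spos L \<sigma> y") auto
  show ?thesis
    using spos_remove(1)[OF fin xy(1), of L y] spos_remove(1)[OF fin xy(2), of L x] True ny m
    by (simp add: power_add[symmetric] add.commute)
next
  case False
  hence yx: "lless L y x" using lless_total[OF d xyL xy(3)] by blast
  have "spos L \<sigma> x \<ge> 2" using spos_remove(2)[OF fin xy(2) yx] .
  then obtain m where m: "spos L \<sigma> x = Suc m" by (cases "spos L \<sigma> x") auto
  show ?thesis
    using spos_remove(1)[OF fin xy(1), of L y] spos_remove(1)[OF fin xy(2), of L x] False yx m
    by (simp add: power_add[symmetric] add.commute)
qed

lemma dcoef_square_zero:
  assumes d: "distinct L" and s: "\<sigma> \<subseteq> set L"
  shows "(\<Sum>\<rho>\<in>Pow (set L). dcoef L W \<sigma> \<rho> * dcoef L W \<rho> \<tau>) = 0"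
proof -
  have fin: "finite \<sigma>" using s finite_subset by blast
  define F where "F = (\<lambda>(x,y). if join W (\<sigma> - {x} - {y}) = join W \<sigma> \<and> \<tau> = \<sigma> - {x} - {y}
        then ((-1::rat) ^ spos L \<sigma> x * (-1) ^ spos L (\<sigma> - {x}) y) else 0)"
  have "(\<Sum>\<rho>\<in>Pow (set L). dcoef L W \<sigma> \<rho> * dcoef L W \<rho> \<tau>) =
     (\<Sum>x\<in>\<sigma>. if join W (\<sigma> - {x}) = join W \<sigma> then (-1) ^ spos L \<sigma> x * dcoef L W (\<sigma> - {x}) \<tau> else 0)"
    by (rule dcoef_sum[OF s])
  also have "\<dots> = (\<Sum>x\<in>\<sigma>. \<Sum>y\<in>\<sigma> - {x}. F (x, y))"
  proof (rule sum.cong[OF refl])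
    fix x assume x: "x \<in> \<sigma>"
    have j: "join W (\<sigma> - {x}) = join W \<sigma> \<and> join W (\<sigma> - {x} - {y}) = join W (\<sigma> - {x}) \<longleftrightarrow>
               join W (\<sigma> - {x} - {y}) = join W \<sigma>" for y
      using join_antimono[of "\<sigma> - {x}" \<sigma> W] join_antimono[of "\<sigma> - {x} - {y}" "\<sigma> - {x}" W] by auto
    show "(if join W (\<sigma> - {x}) = join W \<sigma> then (-1) ^ spos L \<sigma> x * dcoef L W (\<sigma> - {x}) \<tau> else 0)
       = (\<Sum>y\<in>\<sigma> - {x}. F (x, y))"
    proof (cases "join W (\<sigma> - {x}) = join W \<sigma>")
      case True
      thus ?thesis unfolding dcoef_def F_def using j
        by (simp add: sum_distrib_left if_distrib[of "\<lambda>z. _ * z"] conj_commute cong: if_cong)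
    next
      case False
      have "(\<Sum>y\<in>\<sigma> - {x}. F (x, y)) = 0" unfolding F_def using j False by (intro sum.neutral) auto
      thus ?thesis using False by simp
    qed
  qed
  also have "\<dots> = (\<Sum>(x,y)\<in>(SIGMA x:\<sigma>. \<sigma> - {x}). F (x, y))" by (rule sum.Sigma) (use fin in auto)
  also have "\<dots> = sum F (SIGMA x:\<sigma>. \<sigma> - {x})" by (simp add: case_prod_beta')
  also have "\<dots> = 0"
  proof (rule sum_involution_zero[where i = "\<lambda>(x,y). (y,x)"])
    show "finite (SIGMA x:\<sigma>. \<sigma> - {x})" using fin by auto
  next
    fix p assume "p \<in> (SIGMA x:\<sigma>. \<sigma> - {x})"
    then obtain x y where p: "p = (x,y)" "x \<in> \<sigma>" "y \<in> \<sigma>" "x \<noteq> y" by auto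
    show "(case p of (x, y) \<Rightarrow> (y, x)) \<in> (SIGMA x:\<sigma>. \<sigma> - {x})" using p by auto
    show "(case (case p of (x, y) \<Rightarrow> (y, x)) of (x, y) \<Rightarrow> (y, x)) = p" using p by auto
    have sw: "\<sigma> - {y} - {x} = \<sigma> - {x} - {y}" by auto
    have xyL: "x \<in> set L" "y \<in> set L" using p s by auto
    show "F (case p of (x, y) \<Rightarrow> (y, x)) = - F p"
      unfolding F_def p using sw spos_remove_sign[OF d fin p(2,3,4) xyL] by simp
  qed
  finally show ?thesis .
qed

lemma dcoef_nonzeroD:
  assumes "dcoef L W \<sigma> \<tau> \<noteq> 0"
  shows "\<exists>x\<in>\<sigma>. \<tau> = \<sigma> - {x} \<and> join W (\<sigma> - {x}) = join W \<sigma>"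
proof (rule ccontr)
  assume n: "\<not> ?thesis"
  have "\<And>x. x \<in> \<sigma> \<Longrightarrow> \<not> (\<tau> = \<sigma> - {x} \<and> join W (\<sigma> - {x}) = join W \<sigma>)" using n by blast
  hence "dcoef L W \<sigma> \<tau> = 0" unfolding dcoef_def by (intro sum.neutral) simp
  thus False using assms by simp
qed

lemma sdeg_remove:
  assumes "finite \<sigma>" "x \<in> \<sigma>" "join W (\<sigma> - {x}) = join W \<sigma>"
  shows "sdeg W (\<sigma> - {x}) = sdeg W \<sigma> + 1"
proof -
  have "card \<sigma> > 0" using assms card_gt_0_iff by blast
  hence "card \<sigma> \<ge> 1" by simp
  hence "int (card (\<sigma> - {x})) = int (card \<sigma>) - 1" using assms by (simp add: of_nat_diff)
  thus ?thesis unfolding sdeg_def using assms(3) by simp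
qed

lemma sdeg_insert:
  assumes "finite \<sigma>" "x \<notin> \<sigma>" "join W (insert x \<sigma>) = join W \<sigma>"
  shows "sdeg W (insert x \<sigma>) = sdeg W \<sigma> - 1"
  unfolding sdeg_def using assms by simp

lemma dif_nonzeroD:
  assumes "dif L W c \<tau> \<noteq> 0"
  shows "\<exists>\<sigma>. \<sigma> \<subseteq> set L \<and> c \<sigma> \<noteq> 0 \<and> (\<exists>x\<in>\<sigma>. \<tau> = \<sigma> - {x} \<and> join W (\<sigma> - {x}) = join W \<sigma>)"
proof -
  obtain \<sigma> where s: "\<sigma> \<subseteq> set L" "c \<sigma> \<noteq> 0" "dcoef L W \<sigma> \<tau> \<noteq> 0"
    using assms unfolding dif_linmap using linmap_nonzeroD by blast
  thus ?thesis using dcoef_nonzeroD[OF s(3)] by blast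
qed

lemma dif_support: "dif L W c \<tau> \<noteq> 0 \<Longrightarrow> \<tau> \<subseteq> set L"
  using dif_nonzeroD by blast

lemma dif_hcochains:
  assumes "c \<in> hcochains W (set L) k"
  shows "dif L W c \<in> hcochains W (set L) (k + 1)"
  unfolding hcochains_def cochains_def
proof (intro CollectI conjI allI impI)
  fix \<tau> assume "dif L W c \<tau> \<noteq> 0"
  then obtain \<sigma> x where s: "\<sigma> \<subseteq> set L" "c \<sigma> \<noteq> 0" "x \<in> \<sigma>" "\<tau> = \<sigma> - {x}" "join W (\<sigma> - {x}) = join W \<sigma>"
    using dif_nonzeroD by blast
  have f: "finite \<sigma>" using s(1) finite_subset by blast
  show "\<tau> \<subseteq> set L" using s by blast
  have "sdeg W \<sigma> = k" using assms s(2) by (simp add: hcochains_def)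
  thus "sdeg W \<tau> = k + 1" using sdeg_remove[OF f s(3) s(5)] s(4) by simp
qed

lemma dif_zero: "dif L W (\<lambda>_. 0) = (\<lambda>_. 0)"
  unfolding dif_linmap by (rule linmap_zero)


lemma dcoef_nonzero_subset: "dcoef L W \<sigma> \<tau> \<noteq> 0 \<Longrightarrow> \<tau> \<subseteq> \<sigma>"
  using dcoef_nonzeroD by blast

lemma dif_dif:
  assumes "distinct L"
  shows "dif L W (dif L W c) = (\<lambda>_. 0)"
proof -
  have "dif L W (dif L W c) =
      linmap (set L) (\<lambda>\<sigma> \<tau>. \<Sum>\<rho>\<in>Pow (set L). dcoef L W \<sigma> \<rho> * dcoef L W \<rho> \<tau>) c"
    unfolding dif_linmap by (rule linmap_comp)
  also have "\<dots> = linmap (set L) (\<lambda>_ _. 0) c"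
    by (intro ext linmap_cong dcoef_square_zero[OF assms])
  finally show ?thesis by (simp add: linmap_def)
qed

lemma sign_insert_remove:
  assumes "distinct L" "a \<noteq> b" "a \<in> set L" "b \<in> set L" "finite S" "b \<notin> S" "a \<in> S"
  shows "(-1::rat) ^ spos L (insert b S) b * (-1) ^ spos L (insert b S) a
       + (-1) ^ spos L S a * (-1) ^ spos L (insert b S - {a}) b = 0"
proof -
  have fin: "finite (insert b S)" using assms by simp
  have ai: "a \<in> insert b S" using assms by simp
  have i1: "spos L (insert b S) a = spos L S a + (if lless L b a then 1 else 0)"
    by (rule spos_insert[OF assms(5,6)])
  have i2: "spos L (insert b S - {a}) b =
      (if lless L a b then spos L (insert b S) b - 1 else spos L (insert b S) b)"
    by (rule spos_remove(1)[OF fin ai])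
  show ?thesis
  proof (cases "lless L a b")
    case True
    hence nb: "\<not> lless L b a" using lless_asym[OF assms(1)] by blast
    have "spos L (insert b S) b \<ge> 2" using spos_remove(2)[OF fin ai True] .
    hence "odd (spos L (insert b S) b + spos L (insert b S) a +
        (spos L S a + spos L (insert b S - {a}) b))"
      using i1 i2 True nb by auto
    thus ?thesis using minus_one_power_odd by (simp add: power_add[symmetric])
  next
    case False
    hence ba: "lless L b a" using lless_total[OF assms(1,3,4,2)] by blast
    have "odd (spos L (insert b S) b + spos L (insert b S) a +
        (spos L S a + spos L (insert b S - {a}) b))"
      using i1 i2 False ba by auto
    thus ?thesis using minus_one_power_odd by (simp add: power_add[symmetric])
  qed
qed

lemma spos_successor:
  assumes "finite \<sigma>" "a \<in> \<sigma>" "lless L a b" "distinct L"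
    and "\<And>w. w \<in> \<sigma> \<Longrightarrow> lless L a w \<Longrightarrow> lless L w b \<Longrightarrow> False"
  shows "spos L \<sigma> b = Suc (spos L \<sigma> a)"
proof -
  have eq: "{w \<in> \<sigma>. lless L w b} = insert a {w \<in> \<sigma>. lless L w a}"
  proof (intro set_eqI iffI)
    fix w assume w: "w \<in> {w \<in> \<sigma>. lless L w b}"
    show "w \<in> insert a {w \<in> \<sigma>. lless L w a}"
    proof (cases "w = a")
      case False
      have "w \<in> set L" "a \<in> set L"
        using lless_in_set[of L w b] lless_in_set[of L a b] w assms(3) by auto
      moreover have "\<not> lless L a w" using assms(5) w by blast
      ultimately have "lless L w a" using lless_total[OF assms(4)] False by blast
      thus ?thesis using w by simp
    qed simp
  next
    fix w assume "w \<in> insert a {w \<in> \<sigma>. lless L w a}"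
    thus "w \<in> {w \<in> \<sigma>. lless L w b}" using assms(2,3) lless_trans[OF assms(4)] by auto
  qed
  have "a \<notin> {w \<in> \<sigma>. lless L w a}" using lless_irrefl[OF assms(4)] by simp
  thus ?thesis unfolding spos_def eq using assms(1) by simp
qed

text \<open>The arrangement is the list \<open>L = x\<^sub>0 # \<A>'\<close>.  A class of \<open>\<sim>\<close> is indexed by the common
  intersection \<open>u = x\<^sub>0 \<inter> y\<close> of its members, i.e.\ by an element of \<open>tA2 L\<close>.\<close>

locale deletion_restriction =
  fixes L :: "'n::finite csub list"
  assumes L_nonempty: "L \<noteq> []" and distinct_L: "distinct L"
    and contiguous: "\<And>i j k. 1 \<le> i \<Longrightarrow> i < j \<Longrightarrow> j < k \<Longrightarrow> k < length L \<Longrightarrow>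
      sim (hd L) (L ! i) (L ! k) \<Longrightarrow> sim (hd L) (L ! i) (L ! j)"
begin

abbreviation "x0 \<equiv> hd L"
abbreviation "A \<equiv> set L"
abbreviation "A' \<equiv> set (tl L)"
abbreviation "A2 \<equiv> set (tA2 L)"
abbreviation "shift \<equiv> 2 * int (ccodim UNIV x0) - 1"

definition res :: "'n csub \<Rightarrow> 'n csub" where
  "res y = x0 \<inter> y"

definition cls :: "'n csub \<Rightarrow> 'n csub set" where
  "cls u = {y \<in> A'. res y = u}"

definition first :: "'n csub \<Rightarrow> 'n csub" where
  "first u = tl L ! (LEAST i. i < length (tl L) \<and> res (tl L ! i) = u)"

lemma L_eq: "L = x0 # tl L"
  using L_nonempty by simp

lemma A_eq: "A = insert x0 A'"
  by (subst L_eq) simp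

lemma distinct_tl_L: "distinct (tl L)"
  using distinct_L by (simp add: distinct_tl)

lemma x0_notin: "x0 \<notin> A'"
  using distinct_L by (subst (asm) L_eq) simp

lemma A2_eq: "A2 = res ` A'"
  by (simp add: tA2_def res_def)

lemma distinct_tA2: "distinct (tA2 L)"
  by (simp add: tA2_def)

lemma lless_x0: "y \<in> A' \<Longrightarrow> lless L x0 y"
  by (subst L_eq) (simp add: lless_Cons)

lemma not_lless_x0: "\<not> lless L y x0"
proof
  assume "lless L y x0"
  hence "(y = x0 \<and> x0 \<in> A') \<or> lless (tl L) y x0" by (subst (asm) L_eq) (simp add: lless_Cons)
  thus False using x0_notin lless_in_set[of "tl L" y x0] by blast
qed

lemma lless_tl: "a \<in> A' \<Longrightarrow> lless L a b \<longleftrightarrow> lless (tl L) a b"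
  using x0_notin by (subst L_eq) (auto simp: lless_Cons)

lemma lless_A':
  assumes "lless L a b"
  shows "b \<in> A'"
proof -
  have "b \<in> A" using lless_in_set[OF assms] by simp
  moreover have "b \<noteq> x0" using assms not_lless_x0 by auto
  ultimately show ?thesis using A_eq by simp
qed

lemma contiguous_classes:
  assumes "a \<in> A'" "lless L a b" "lless L b c" "res a = res c"
  shows "res a = res b"
proof -
  obtain i j where ij: "i < j" "j < length L" "L ! i = a" "L ! j = b"
    using assms(2) unfolding lless_def by blast
  obtain j' k where jk: "j' < k" "k < length L" "L ! j' = b" "L ! k = c"
    using assms(3) unfolding lless_def by blast
  have "j' = j" using ij jk distinct_L nth_eq_iff_index_eq[of L j' j] by auto
  moreover have "i \<noteq> 0"
  proof
    assume "i = 0"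
    then have "a = x0" using ij L_nonempty by (simp add: hd_conv_nth)
    with assms(1) x0_notin show False by simp
  qed
  ultimately have "sim x0 (L ! i) (L ! j)"
    using contiguous[of i j k] ij jk assms(4) by (simp add: sim_def res_def)
  thus ?thesis using ij by (simp add: sim_def res_def)
qed

lemma first_in_cls:
  assumes "u \<in> A2"
  shows "first u \<in> cls u"
proof -
  have "\<exists>i. i < length (tl L) \<and> res (tl L ! i) = u"
    using assms by (auto simp: A2_eq in_set_conv_nth)
  from LeastI_ex[OF this] show ?thesis unfolding first_def cls_def by auto
qed

lemma first_lless:
  assumes u: "u \<in> A2" and y: "y \<in> cls u" "y \<noteq> first u"
  shows "lless L (first u) y"
proof -
  define P where "P i \<longleftrightarrow> i < length (tl L) \<and> res (tl L ! i) = u" for i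
  obtain j where j: "j < length (tl L)" "tl L ! j = y"
    using y(1) by (auto simp: in_set_conv_nth cls_def)
  then have "P j" using y(1) by (simp add: P_def cls_def)
  then have "Least P \<le> j" by (rule Least_le)
  moreover have "Least P \<noteq> j" using y(2) j unfolding first_def P_def by auto
  ultimately have "lless (tl L) (first u) y"
    unfolding lless_def first_def P_def[symmetric]
      using j by (intro exI[of _ "Least P"] exI[of _ j]) auto
  then show ?thesis using lless_tl first_in_cls[OF u] by (simp add: cls_def)
qed

lemma res_A2: "y \<in> A' \<Longrightarrow> res y \<in> A2"
  by (simp add: A2_eq)

lemma res_first: "u \<in> A2 \<Longrightarrow> res (first u) = u"
  using first_in_cls by (simp add: cls_def)

lemma first_A': "u \<in> A2 \<Longrightarrow> first u \<in> A'"
  using first_in_cls by (simp add: cls_def)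

lemma cls_between_first:
  assumes "u \<in> A2" "y \<in> cls u" "lless L (first u) w" "lless L w y"
  shows "w \<in> cls u"
proof -
  have f: "first u \<in> A'" "res (first u) = u" using first_in_cls[OF assms(1)] by (auto simp: cls_def)
  have "res (first u) = res w"
    using contiguous_classes[OF f(1) assms(3,4)] assms(2) f by (simp add: cls_def)
  moreover have "w \<in> A'" using lless_A'[OF assms(3)] .
  ultimately show ?thesis using f by (simp add: cls_def)
qed

lemma lless_tA2:
  assumes "x \<in> A'" "y \<in> A'" "res x \<noteq> res y" "lless L x y"
  shows "lless (tA2 L) (res x) (res y)"
proof -
  define M where "M = tl L"
  have dM: "distinct M" using distinct_tl_L M_def by simp
  have xy: "lless M x y" using assms lless_tl M_def by simp
  obtain i j where ij: "i < j" "j < length M" "M ! i = x" "M ! j = y"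
    using xy unfolding lless_def by blast
  define p where "p = take j M"
  define q where "q = drop j M"
  have Mpq: "M = p @ q" using p_def q_def by simp
  have "q ! 0 = y" "0 < length q" using ij q_def by auto
  hence yq: "y \<in> set q" using nth_mem by metis
  have "p ! i = x" "i < length p" using ij p_def by auto
  hence xp: "x \<in> set p" using nth_mem by metis
  have nq: "res x \<notin> res ` set q"
  proof
    assume "res x \<in> res ` set q"
    then obtain w where w: "w \<in> set q" "res w = res x" by auto
    then obtain k where k: "k < length q" "q ! k = w" by (auto simp: in_set_conv_nth)
    hence wM: "w = M ! (j + k)" "j + k < length M" using q_def ij by auto
    show False
    proof (cases "k = 0")
      case True thus False using wM ij w assms(3) by simp
    next
      case False
      hence "lless M y w" unfolding lless_def
        using wM ij by (intro exI[of _ j] exI[of _ "j+k"]) auto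
      hence "lless L y w" using lless_tl assms(2) M_def by simp
      thus False using contiguous_classes[OF assms(1,4)] w assms(3) by simp
    qed
  qed
  have "tA2 L = remdups (filter (\<lambda>a. a \<notin> set (map res q)) (map res p)) @ remdups (map res q)"
    unfolding tA2_def res_def[abs_def] M_def[symmetric] Mpq
    by (simp only: map_append remdups_append_split)
  moreover have "res x \<in> set (remdups (filter (\<lambda>a. a \<notin> set (map res q)) (map res p)))"
    using xp nq by auto
  moreover have "res y \<in> set (remdups (map res q))" using yq by auto
  ultimately show ?thesis using lless_append by (simp only:)
qed

lemma lless_tA2_iff:
  assumes "x \<in> A'" "y \<in> A'" "res x \<noteq> res y"
  shows "lless (tA2 L) (res x) (res y) \<longleftrightarrow> lless L x y"
proof
  assume "lless L x y" thus "lless (tA2 L) (res x) (res y)" using lless_tA2 assms by blast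
next
  assume a: "lless (tA2 L) (res x) (res y)"
  show "lless L x y"
  proof (rule ccontr)
    assume "\<not> lless L x y"
    moreover have "x \<noteq> y" using assms by auto
    ultimately have "lless L y x" using lless_total[OF distinct_L, of x y] assms A_eq by auto
    hence "lless (tA2 L) (res y) (res x)" using lless_tA2[of y x] assms by auto
    thus False using a lless_asym[OF distinct_tA2] by blast
  qed
qed

lemma cls_A': "y \<in> cls u \<Longrightarrow> y \<in> A'"
  by (simp add: cls_def)

lemma res_cls: "y \<in> cls u \<Longrightarrow> res y = u"
  by (simp add: cls_def)

lemma x0_notin_cls: "x0 \<notin> cls u"
  using x0_notin cls_A' by blast

lemma res_eta: "(\<lambda>y. x0 \<inter> y) = res"
  by (simp add: res_def fun_eq_iff)

lemma sim_iff_res: "sim x0 y z \<longleftrightarrow> res y = res z"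
  by (simp add: sim_def res_def)

lemma join_insert_equiv:
  assumes "x0 \<in> S" "y \<in> S" "res z = res y"
  shows "join W (insert z S) = join W S"
proof -
  have "\<Inter>S \<subseteq> x0 \<inter> y" using assms by auto
  also have "\<dots> \<subseteq> z" using assms(3) unfolding res_def by auto
  finally show ?thesis unfolding join_def by auto
qed

lemma join_eq_Inter_res: "x0 \<in> \<sigma> \<Longrightarrow> join UNIV \<sigma> = \<Inter> (res ` \<sigma>)"
  by (auto simp: join_def res_def)

lemma join_x0_res: "x0 \<in> \<rho> \<Longrightarrow> join x0 (res ` (\<rho> - {x0})) = join UNIV \<rho>"
  by (auto simp: join_def res_def)

end

section \<open>The quotient complex \<open>D(\<A>)/D(\<A>')\<close>\<close>

text \<open>The quotient is modelled by the cochains supported on simplices containing \<open>x\<^sub>0\<close>; its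
  differential is that of \<open>D(\<A>)\<close> followed by discarding the simplices without \<open>x\<^sub>0\<close>.\<close>

context deletion_restriction
begin

definition qcoef :: "'n csub set \<Rightarrow> 'n csub set \<Rightarrow> rat" where
  "qcoef \<sigma> \<tau> = (if x0 \<in> \<sigma> \<and> x0 \<in> \<tau> then dcoef L UNIV \<sigma> \<tau> else 0)"

abbreviation "qdif \<equiv> linmap A qcoef"

definition restrict_x0 :: "('n csub set \<Rightarrow> rat) \<Rightarrow> ('n csub set \<Rightarrow> rat)" where
  "restrict_x0 c = (\<lambda>\<sigma>. if x0 \<in> \<sigma> then c \<sigma> else 0)"

definition qcochains :: "('n csub set \<Rightarrow> rat) set" where
  "qcochains = {c. \<forall>\<sigma>. c \<sigma> \<noteq> 0 \<longrightarrow> \<sigma> \<subseteq> A \<and> x0 \<in> \<sigma>}"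

definition qhcochains :: "int \<Rightarrow> ('n csub set \<Rightarrow> rat) set" where
  "qhcochains k = {c \<in> qcochains. \<forall>\<sigma>. c \<sigma> \<noteq> 0 \<longrightarrow> sdeg UNIV \<sigma> = k}"

lemma finite_simplex: "\<sigma> \<subseteq> A \<Longrightarrow> finite \<sigma>"
  using finite_subset by blast

lemma qcoef_eq_dcoef: "x0 \<in> \<tau> \<Longrightarrow> qcoef \<sigma> \<tau> = dcoef L UNIV \<sigma> \<tau>"
  by (auto simp: qcoef_def dest: dcoef_nonzero_subset)

lemma qdif_eq: "qdif c = restrict_x0 (dif L UNIV c)"
proof
  fix \<tau>
  show "qdif c \<tau> = restrict_x0 (dif L UNIV c) \<tau>"
    by (cases "x0 \<in> \<tau>") (simp_all add: restrict_x0_def dif_linmap linmap_def qcoef_eq_dcoef,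
        simp add: qcoef_def)
qed

lemma qdif_restrict_x0: "qdif (restrict_x0 c) = qdif c"
  unfolding linmap_def restrict_x0_def by (intro ext sum.cong) (auto simp: qcoef_def)

lemma qdif_qdif: "qdif (qdif c) = (\<lambda>_. 0)"
proof -
  have "qdif (qdif c) = qdif (dif L UNIV c)"
    by (simp only: qdif_eq[of c] qdif_restrict_x0)
  also have "\<dots> = (\<lambda>_. 0)"
    by (simp add: qdif_eq dif_dif[OF distinct_L] restrict_x0_def)
  finally show ?thesis .
qed

lemma qcochainsI: "(\<And>\<tau>. c \<tau> \<noteq> 0 \<Longrightarrow> \<tau> \<subseteq> A \<and> x0 \<in> \<tau>) \<Longrightarrow> c \<in> qcochains"
  by (auto simp: qcochains_def)

lemma qhcochainsI:
  "(\<And>\<tau>. c \<tau> \<noteq> 0 \<Longrightarrow> \<tau> \<subseteq> A \<and> x0 \<in> \<tau> \<and> sdeg UNIV \<tau> = k) \<Longrightarrow> c \<in> qhcochains k"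
  by (auto simp: qhcochains_def qcochains_def)

lemma qhcochains_qcochains: "c \<in> qhcochains k \<Longrightarrow> c \<in> qcochains"
  by (simp add: qhcochains_def)

lemma qhcochains_hcochains: "c \<in> qhcochains k \<Longrightarrow> c \<in> hcochains UNIV A k"
  by (auto simp: qhcochains_def qcochains_def hcochains_def cochains_def)

lemma restrict_x0_qhcochains: "c \<in> hcochains UNIV A k \<Longrightarrow> restrict_x0 c \<in> qhcochains k"
  by (auto simp: restrict_x0_def hcochains_def cochains_def intro!: qhcochainsI split: if_splits)

lemma qcochains_add:
  assumes "a \<in> qcochains" "b \<in> qcochains"
  shows "(\<lambda>\<tau>. a \<tau> + b \<tau>) \<in> qcochains"
proof (rule qcochainsI)
  fix \<tau> assume "a \<tau> + b \<tau> \<noteq> 0"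
  hence "a \<tau> \<noteq> 0 \<or> b \<tau> \<noteq> 0" by auto
  thus "\<tau> \<subseteq> A \<and> x0 \<in> \<tau>" using assms unfolding qcochains_def by blast
qed

lemma qhcochains_add:
  assumes "a \<in> qhcochains k" "b \<in> qhcochains k"
  shows "(\<lambda>\<tau>. a \<tau> + b \<tau>) \<in> qhcochains k"
proof (rule qhcochainsI)
  fix \<tau> assume "a \<tau> + b \<tau> \<noteq> 0"
  hence "a \<tau> \<noteq> 0 \<or> b \<tau> \<noteq> 0" by auto
  thus "\<tau> \<subseteq> A \<and> x0 \<in> \<tau> \<and> sdeg UNIV \<tau> = k"
    using assms unfolding qhcochains_def qcochains_def by blast
qed

lemma linmap_qcochains:
  assumes "\<And>\<sigma> \<tau>. \<sigma> \<subseteq> A \<Longrightarrow> x0 \<in> \<sigma> \<Longrightarrow> M \<sigma> \<tau> \<noteq> 0 \<Longrightarrow> \<tau> \<subseteq> A \<and> x0 \<in> \<tau>"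
    and "c \<in> qcochains"
  shows "linmap A M c \<in> qcochains"
proof (rule qcochainsI)
  fix \<tau> assume "linmap A M c \<tau> \<noteq> 0"
  then obtain \<sigma> where s: "\<sigma> \<subseteq> A" "c \<sigma> \<noteq> 0" "M \<sigma> \<tau> \<noteq> 0" using linmap_nonzeroD by blast
  have "x0 \<in> \<sigma>" using assms(2) s(2) by (auto simp: qcochains_def)
  thus "\<tau> \<subseteq> A \<and> x0 \<in> \<tau>" using assms(1)[OF s(1) _ s(3)] by simp
qed

lemma linmap_qhcochains:
  assumes "\<And>\<sigma> \<tau>. \<sigma> \<subseteq> A \<Longrightarrow> x0 \<in> \<sigma> \<Longrightarrow> M \<sigma> \<tau> \<noteq> 0 \<Longrightarrow>
      \<tau> \<subseteq> A \<and> x0 \<in> \<tau> \<and> sdeg UNIV \<tau> = sdeg UNIV \<sigma> + e"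
    and "c \<in> qhcochains k"
  shows "linmap A M c \<in> qhcochains (k + e)"
proof (rule qhcochainsI)
  fix \<tau> assume "linmap A M c \<tau> \<noteq> 0"
  then obtain \<sigma> where s: "\<sigma> \<subseteq> A" "c \<sigma> \<noteq> 0" "M \<sigma> \<tau> \<noteq> 0" using linmap_nonzeroD by blast
  have "x0 \<in> \<sigma>" "sdeg UNIV \<sigma> = k" using assms(2) s(2) by (auto simp: qhcochains_def qcochains_def)
  thus "\<tau> \<subseteq> A \<and> x0 \<in> \<tau> \<and> sdeg UNIV \<tau> = k + e" using assms(1)[OF s(1) _ s(3)] by simp
qed

lemma qcoef_nonzeroD:
  assumes "\<sigma> \<subseteq> A" "qcoef \<sigma> \<tau> \<noteq> 0"
  shows "\<tau> \<subseteq> A \<and> x0 \<in> \<tau> \<and> sdeg UNIV \<tau> = sdeg UNIV \<sigma> + 1"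
proof -
  have x: "x0 \<in> \<tau>" "dcoef L UNIV \<sigma> \<tau> \<noteq> 0"
    using assms(2) by (simp_all add: qcoef_def split: if_splits)
  then obtain x where "x \<in> \<sigma>" "\<tau> = \<sigma> - {x}" "join UNIV (\<sigma> - {x}) = join UNIV \<sigma>"
    using dcoef_nonzeroD by blast
  thus ?thesis using x(1) assms(1) sdeg_remove[OF finite_simplex[OF assms(1)]] by auto
qed

lemma qdif_qcochains: "c \<in> qcochains \<Longrightarrow> qdif c \<in> qcochains"
  by (rule linmap_qcochains) (use qcoef_nonzeroD in blast)

end

context deletion_restriction
begin

definition single_in :: "'n csub set \<Rightarrow> 'n csub \<Rightarrow> bool" where
  "single_in \<sigma> u \<longleftrightarrow> (\<forall>y\<in>\<sigma>. \<forall>z\<in>\<sigma>. y \<in> cls u \<longrightarrow> z \<in> cls u \<longrightarrow> y = z)"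

definition collapse :: "'n csub set \<Rightarrow> 'n csub \<Rightarrow> 'n csub" where
  "collapse S y = (if y \<in> A' \<and> res y \<in> S then first (res y) else y)"

definition collapse_coef :: "'n csub set \<Rightarrow> 'n csub set \<Rightarrow> 'n csub set \<Rightarrow> rat" where
  "collapse_coef S \<sigma> \<tau> = (if x0 \<in> \<sigma> \<and> (\<forall>u\<in>S. single_in \<sigma> u) \<and> \<tau> = collapse S ` \<sigma> then 1 else 0)"

lemma collapse_x0: "collapse S x0 = x0"
  using x0_notin by (simp add: collapse_def)

lemma res_collapse: "y \<in> A \<Longrightarrow> res (collapse S y) = res y"
  unfolding collapse_def using res_first res_A2 by auto

lemma collapse_A: "y \<in> A \<Longrightarrow> collapse S y \<in> A"
  unfolding collapse_def using first_A' res_A2 A_eq by auto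

lemma collapse_A': "y \<in> A' \<Longrightarrow> collapse S y \<in> A'"
  unfolding collapse_def using first_A' res_A2 by auto

lemma collapse_singleton: "collapse {u} y = (if y \<in> cls u then first u else y)"
  by (auto simp: collapse_def cls_def)

lemma inj_on_collapse:
  assumes s: "\<sigma> \<subseteq> A" and single: "\<forall>u\<in>S. single_in \<sigma> u"
  shows "inj_on (collapse S) \<sigma>"
proof (rule inj_onI)
  fix y z assume yz: "y \<in> \<sigma>" "z \<in> \<sigma>" and e: "collapse S y = collapse S z"
  then have A: "y \<in> A" "z \<in> A" using s by auto
  then have same: "res y = res z" using res_collapse e by metis
  show "y = z"
  proof (cases "y \<in> A' \<and> z \<in> A'")
    case True
    show ?thesis
    proof (cases "res y \<in> S")
      case True
      moreover have "y \<in> cls (res y)" "z \<in> cls (res y)" using \<open>y \<in> A' \<and> z \<in> A'\<close> same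
        by (simp_all add: cls_def)
      ultimately show ?thesis using single yz unfolding single_in_def by blast
    next
      case False
      then show ?thesis using e same by (simp add: collapse_def)
    qed
  next
    case False
    then have "y = x0 \<or> z = x0" using A A_eq by auto
    then show ?thesis using e A A_eq collapse_x0 collapse_A' x0_notin by (metis insert_iff)
  qed
qed

lemma collapse_coef_nonzeroD:
  assumes s: "\<sigma> \<subseteq> A" and nz: "collapse_coef S \<sigma> \<tau> \<noteq> 0"
  shows "\<tau> \<subseteq> A \<and> x0 \<in> \<tau> \<and> sdeg UNIV \<tau> = sdeg UNIV \<sigma>"
proof -
  have h: "x0 \<in> \<sigma>" "\<forall>u\<in>S. single_in \<sigma> u" "\<tau> = collapse S ` \<sigma>"
    using nz by (simp_all add: collapse_coef_def split: if_splits)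
  have tU: "\<tau> \<subseteq> A" using h(3) s collapse_A by blast
  have x0t: "x0 \<in> \<tau>" using h(1,3) collapse_x0 by (metis image_eqI)
  have lt: "res ` \<tau> = res ` \<sigma>"
  proof -
    have "res ` \<tau> = (res \<circ> collapse S) ` \<sigma>" using h(3) by (simp add: image_comp)
    also have "\<dots> = res ` \<sigma>" using res_collapse s by (intro image_cong) auto
    finally show ?thesis .
  qed
  have j: "join UNIV \<tau> = join UNIV \<sigma>"
    using join_eq_Inter_res[OF x0t] join_eq_Inter_res[OF h(1)] lt by simp
  have c: "card \<tau> = card \<sigma>" using h(3) card_image[OF inj_on_collapse[OF s h(2)]] by simp
  show ?thesis using tU x0t j c by (simp add: sdeg_def)
qed

lemma collapse_coef_empty: "collapse_coef {} \<sigma> \<tau> = (if x0 \<in> \<sigma> \<and> \<tau> = \<sigma> then 1 else 0)"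
proof -
  have "collapse {} ` \<sigma> = \<sigma>" by (rule image_eq_self) (simp add: collapse_def)
  thus ?thesis by (simp add: collapse_coef_def)
qed

lemma collapse_insert:
  assumes u: "u \<notin> S" and y: "y \<in> A"
  shows "collapse {u} (collapse S y) = collapse (insert u S) y"
proof (cases "y \<in> A'")
  case False
  thus ?thesis unfolding collapse_def using y by auto
next
  case yA: True
  show ?thesis
  proof (cases "res y \<in> S")
    case True
    have "res y \<in> A2" using res_A2 yA by blast
    hence "first (res y) \<in> A'" "res (first (res y)) = res y" using first_A' res_first by auto
    thus ?thesis using True yA u unfolding collapse_def by auto
  next
    case False
    thus ?thesis using yA unfolding collapse_def by auto
  qed
qed

lemma single_in_cong: "\<sigma> \<inter> cls u = \<sigma>' \<inter> cls u \<Longrightarrow> single_in \<sigma> u = single_in \<sigma>' u"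
  unfolding single_in_def by (metis IntD1 IntD2 IntI)

lemma collapse_image_cls:
  assumes u: "u \<notin> S" and s: "\<sigma> \<subseteq> A"
  shows "collapse S ` \<sigma> \<inter> cls u = \<sigma> \<inter> cls u"
proof (intro set_eqI iffI)
  fix z assume "z \<in> collapse S ` \<sigma> \<inter> cls u"
  then obtain y where y: "y \<in> \<sigma>" "z = collapse S y" "z \<in> cls u" by blast
  have yU: "y \<in> A" using y s by blast
  have "res y = u" using res_collapse[OF yU, of S] y res_cls by simp
  hence "collapse S y = y" using u by (simp add: collapse_def)
  thus "z \<in> \<sigma> \<inter> cls u" using y by simp
next
  fix z assume z: "z \<in> \<sigma> \<inter> cls u"
  have "res z = u" using z res_cls by blast
  hence "collapse S z = z" using u by (simp add: collapse_def)
  thus "z \<in> collapse S ` \<sigma> \<inter> cls u" using z by (metis IntD1 IntD2 IntI image_eqI)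
qed

lemma collapse_coef_insert:
  assumes u: "u \<notin> S" and s: "\<sigma> \<subseteq> A"
  shows "(\<Sum>\<rho>\<in>Pow A. collapse_coef S \<sigma> \<rho> * collapse_coef {u} \<rho> \<tau>) =
    collapse_coef (insert u S) \<sigma> \<tau>"
proof -
  have gU: "collapse S ` \<sigma> \<in> Pow A" using s collapse_A by blast
  have "(\<Sum>\<rho>\<in>Pow A. collapse_coef S \<sigma> \<rho> * collapse_coef {u} \<rho> \<tau>) =
      collapse_coef S \<sigma> (collapse S ` \<sigma>) * collapse_coef {u} (collapse S ` \<sigma>) \<tau>"
    by (rule sum_eq_single[OF _ gU]) (simp_all add: collapse_coef_def)
  also have "\<dots> = collapse_coef (insert u S) \<sigma> \<tau>"
  proof -
    have im: "collapse {u} ` (collapse S ` \<sigma>) = collapse (insert u S) ` \<sigma>"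
      unfolding image_image by (rule image_cong[OF refl]) (use collapse_insert[OF u] s in blast)
    have sg: "single_in (collapse S ` \<sigma>) u = single_in \<sigma> u"
      using single_in_cong[OF collapse_image_cls[OF u s]] .
    have x0: "x0 \<in> \<sigma> \<Longrightarrow> x0 \<in> collapse S ` \<sigma>" using collapse_x0 by (metis image_eqI)
    show ?thesis using x0 sg im by (simp add: collapse_coef_def)
  qed
  finally show ?thesis .
qed

abbreviation "collapse_map S \<equiv> linmap A (collapse_coef S)"

lemma collapse_map_insert:
  assumes "u \<notin> S"
  shows "collapse_map {u} (collapse_map S c) = collapse_map (insert u S) c"
proof -
  have "collapse_map {u} (collapse_map S c) =
      linmap A (\<lambda>\<sigma> \<tau>. \<Sum>\<rho>\<in>Pow A. collapse_coef S \<sigma> \<rho> * collapse_coef {u} \<rho> \<tau>) c"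
    by (rule linmap_comp)
  also have "\<dots> = collapse_map (insert u S) c"
    by (intro ext linmap_cong collapse_coef_insert[OF assms])
  finally show ?thesis .
qed


lemma collapse_map_empty: "c \<in> qcochains \<Longrightarrow> collapse_map {} c = c"
proof
  fix \<tau> assume c: "c \<in> qcochains"
  have "collapse_map {} c \<tau> = linmap A (\<lambda>\<sigma> \<tau>. if \<tau> = \<sigma> then 1 else 0) c \<tau>"
    by (rule linmap_cong) (use c in \<open>auto simp: collapse_coef_empty qcochains_def\<close>)
  also have "\<dots> = c \<tau>" by (rule linmap_id) (use c in \<open>auto simp: qcochains_def\<close>)
  finally show "collapse_map {} c \<tau> = c \<tau>" .
qed

lemma collapse_map_qhcochains: "c \<in> qhcochains k \<Longrightarrow> collapse_map S c \<in> qhcochains k"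
  using linmap_qhcochains[where e = 0] collapse_coef_nonzeroD by simp

lemma collapse_map_qcochains: "c \<in> qcochains \<Longrightarrow> collapse_map S c \<in> qcochains"
  by (rule linmap_qcochains) (use collapse_coef_nonzeroD in blast)


end

section \<open>A contracting homotopy\<close>

context deletion_restriction
begin

definition homotopy_coef :: "'n csub \<Rightarrow> 'n csub set \<Rightarrow> 'n csub set \<Rightarrow> rat" where
  "homotopy_coef u \<sigma> \<tau> = (if x0 \<in> \<sigma> \<and> \<sigma> \<inter> cls u \<noteq> {} \<and> first u \<notin> \<sigma> \<and> \<tau> = insert (first u) \<sigma>
                 then (-1) ^ spos L \<tau> (first u) else 0)"

abbreviation "homotopy_map u \<equiv> linmap A (homotopy_coef u)"

abbreviation "redundant \<sigma> x \<equiv> join UNIV (\<sigma> - {x}) = join UNIV \<sigma>"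

lemma homotopy_coef_x0: "homotopy_coef u \<rho> \<tau> \<noteq> 0 \<Longrightarrow> x0 \<in> \<rho>"
  by (simp add: homotopy_coef_def split: if_splits)

lemma homotopy_coef_nonzeroD:
  assumes u: "u \<in> A2" and "\<sigma> \<subseteq> A" "homotopy_coef u \<sigma> \<tau> \<noteq> 0"
  shows "\<tau> \<subseteq> A \<and> x0 \<in> \<tau> \<and> sdeg UNIV \<tau> = sdeg UNIV \<sigma> - 1"
proof -
  have h: "x0 \<in> \<sigma>" "\<sigma> \<inter> cls u \<noteq> {}" "first u \<notin> \<sigma>" "\<tau> = insert (first u) \<sigma>"
    using assms(3) by (simp_all add: homotopy_coef_def split: if_splits)
  then obtain y where y: "y \<in> \<sigma>" "y \<in> cls u" by blast
  have j: "join UNIV (insert (first u) \<sigma>) = join UNIV \<sigma>"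
    by (rule join_insert_equiv[OF h(1) y(1)])
      (simp add: res_cls[OF y(2)] res_cls[OF first_in_cls[OF u]])
  have fU: "first u \<in> A" using first_A'[OF u] A_eq by blast
  show ?thesis using sdeg_insert[OF finite_simplex[OF assms(2)] h(3) j] h(1,4) assms(2) fU by simp
qed

lemma homotopy_map_qhcochains:
  "u \<in> A2 \<Longrightarrow> c \<in> qhcochains k \<Longrightarrow> homotopy_map u c \<in> qhcochains (k - 1)"
  using linmap_qhcochains[where e = "-1"] homotopy_coef_nonzeroD by simp

lemma homotopy_map_qcochains:
  "u \<in> A2 \<Longrightarrow> c \<in> qcochains \<Longrightarrow> homotopy_map u c \<in> qcochains"
  by (rule linmap_qcochains) (use homotopy_coef_nonzeroD in blast)

lemma qcoef_homotopy_coef_sum: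
  assumes s: "\<sigma> \<subseteq> A" "x0 \<in> \<sigma>"
  shows "(\<Sum>\<rho>\<in>Pow A. qcoef \<sigma> \<rho> * homotopy_coef u \<rho> \<tau>) =
     (\<Sum>x\<in>\<sigma>. if redundant \<sigma> x then (-1) ^ spos L \<sigma> x * homotopy_coef u (\<sigma> - {x}) \<tau> else 0)"
proof -
  have "(\<Sum>\<rho>\<in>Pow A. qcoef \<sigma> \<rho> * homotopy_coef u \<rho> \<tau>) =
      (\<Sum>\<rho>\<in>Pow A. dcoef L UNIV \<sigma> \<rho> * homotopy_coef u \<rho> \<tau>)"
    by (rule sum.cong) (auto simp: qcoef_def s dest: homotopy_coef_x0)
  thus ?thesis using dcoef_sum[OF s(1)] by simp
qed

lemma spos_insert_first:
  assumes u: "u \<in> A2" and s: "\<sigma> \<subseteq> A" and f: "first u \<notin> \<sigma>" and x: "\<sigma> \<inter> cls u = {x}"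
  shows "spos L (insert (first u) \<sigma>) x = Suc (spos L (insert (first u) \<sigma>) (first u))"
proof (rule spos_successor[OF _ _ _ distinct_L])
  have xC: "x \<in> cls u" "x \<in> \<sigma>" using x by auto
  show "finite (insert (first u) \<sigma>)" using s finite_simplex by blast
  show "first u \<in> insert (first u) \<sigma>" by simp
  show "lless L (first u) x" using first_lless[OF u xC(1)] f xC(2) by blast
  fix w assume w: "w \<in> insert (first u) \<sigma>" "lless L (first u) w" "lless L w x"
  then have "w \<in> cls u" "w \<in> \<sigma>"
    using cls_between_first[OF u xC(1)] lless_irrefl[OF distinct_L] by auto
  then have "w = x" using x by auto
  with w(3) show False using lless_irrefl[OF distinct_L] by simp
qed

lemma homotopy_identity_disjoint:
  assumes s: "\<sigma> \<subseteq> A" "x0 \<in> \<sigma>" and d: "\<sigma> \<inter> cls u = {}"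
  shows "(\<Sum>\<rho>\<in>Pow A. homotopy_coef u \<sigma> \<rho> * qcoef \<rho> \<tau>) + (\<Sum>\<rho>\<in>Pow A. qcoef \<sigma> \<rho> * homotopy_coef u \<rho> \<tau>)
    = (if \<tau> = \<sigma> then 1 else 0) - collapse_coef {u} \<sigma> \<tau>"
proof -
  have "(\<Sum>\<rho>\<in>Pow A. homotopy_coef u \<sigma> \<rho> * qcoef \<rho> \<tau>) = 0"
    using d by (simp add: homotopy_coef_def)
  moreover have "(\<Sum>\<rho>\<in>Pow A. qcoef \<sigma> \<rho> * homotopy_coef u \<rho> \<tau>) = 0"
    unfolding qcoef_homotopy_coef_sum[OF s]
      using d by (intro sum.neutral) (auto simp: homotopy_coef_def)
  moreover have "collapse {u} ` \<sigma> = \<sigma>"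
    using d by (intro image_eq_self) (auto simp: collapse_singleton)
  moreover have "single_in \<sigma> u" using d unfolding single_in_def by auto
  ultimately show ?thesis using s by (simp add: collapse_coef_def)
qed

lemma homotopy_identity_first_mem:
  assumes u: "u \<in> A2" and s: "\<sigma> \<subseteq> A" "x0 \<in> \<sigma>" and f: "first u \<in> \<sigma>"
  shows "(\<Sum>\<rho>\<in>Pow A. homotopy_coef u \<sigma> \<rho> * qcoef \<rho> \<tau>) + (\<Sum>\<rho>\<in>Pow A. qcoef \<sigma> \<rho> * homotopy_coef u \<rho> \<tau>)
    = (if \<tau> = \<sigma> then 1 else 0) - collapse_coef {u} \<sigma> \<tau>"
proof -
  let ?f = "first u"
  have fC: "?f \<in> cls u" using first_in_cls[OF u] .
  have B: "(\<Sum>\<rho>\<in>Pow A. qcoef \<sigma> \<rho> * homotopy_coef u \<rho> \<tau>) =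
      (if redundant \<sigma> ?f then (-1) ^ spos L \<sigma> ?f * homotopy_coef u (\<sigma> - {?f}) \<tau> else 0)"
    unfolding qcoef_homotopy_coef_sum[OF s]
    by (rule sum_eq_single[OF finite_simplex[OF s(1)] f]) (simp add: homotopy_coef_def f)
  have "(\<Sum>\<rho>\<in>Pow A. homotopy_coef u \<sigma> \<rho> * qcoef \<rho> \<tau>) = 0"
    using f by (simp add: homotopy_coef_def)
  moreover have "(\<Sum>\<rho>\<in>Pow A. qcoef \<sigma> \<rho> * homotopy_coef u \<rho> \<tau>) = (if \<tau> = \<sigma> then 1 else 0)
      \<and> collapse_coef {u} \<sigma> \<tau> = 0
    \<or> (\<Sum>\<rho>\<in>Pow A. qcoef \<sigma> \<rho> * homotopy_coef u \<rho> \<tau>) = 0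
      \<and> collapse_coef {u} \<sigma> \<tau> = (if \<tau> = \<sigma> then 1 else 0)"
  proof (cases "(\<sigma> - {?f}) \<inter> cls u = {}")
    case True
    have "single_in \<sigma> u" using True unfolding single_in_def by auto
    moreover have "collapse {u} ` \<sigma> = \<sigma>"
      using True f by (intro image_eq_self) (auto simp: collapse_singleton)
    ultimately show ?thesis using B True s by (simp add: homotopy_coef_def collapse_coef_def)
  next
    case False
    then obtain y where y: "y \<in> \<sigma>" "y \<noteq> ?f" "y \<in> cls u" by auto
    have "insert ?f (\<sigma> - {?f}) = \<sigma>" using f by auto
    moreover have "join UNIV (insert ?f (\<sigma> - {?f})) = join UNIV (\<sigma> - {?f})"
      by (rule join_insert_equiv[of _ y]) (use s y fC res_cls x0_notin_cls in auto)
    ultimately have "redundant \<sigma> ?f" by simp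
    moreover have "x0 \<noteq> ?f" using fC x0_notin_cls by metis
    then have "homotopy_coef u (\<sigma> - {?f}) \<tau> = (if \<tau> = \<sigma> then (-1) ^ spos L \<sigma> ?f else 0)"
      unfolding homotopy_coef_def using False s(2) \<open>insert ?f (\<sigma> - {?f}) = \<sigma>\<close> by simp
    moreover have "\<not> single_in \<sigma> u" using y f fC unfolding single_in_def by blast
    ultimately show ?thesis using B by (simp add: collapse_coef_def flip: power_add)
  qed
  ultimately show ?thesis by (elim disjE) simp_all
qed

lemma homotopy_coef_qcoef_sum:
  assumes u: "u \<in> A2" and s: "\<sigma> \<subseteq> A" "x0 \<in> \<sigma>" and f: "first u \<notin> \<sigma>"
    and y: "y \<in> \<sigma>" "y \<in> cls u"
  defines "\<sigma>' \<equiv> insert (first u) \<sigma>"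
  shows "(\<Sum>\<rho>\<in>Pow A. homotopy_coef u \<sigma> \<rho> * qcoef \<rho> \<tau>) = (if \<tau> = \<sigma> then 1 else 0) +
    (\<Sum>x\<in>\<sigma>. if x0 \<in> \<tau> \<and> \<tau> = \<sigma>' - {x} \<and> redundant \<sigma>' x
             then (-1) ^ spos L \<sigma>' (first u) * (-1) ^ spos L \<sigma>' x else 0)"
proof -
  let ?f = "first u"
  have "\<sigma>' \<in> Pow A" using s first_A'[OF u] A_eq by (auto simp: \<sigma>'_def)
  then have "(\<Sum>\<rho>\<in>Pow A. homotopy_coef u \<sigma> \<rho> * qcoef \<rho> \<tau>) = homotopy_coef u \<sigma> \<sigma>' * qcoef \<sigma>' \<tau>"
    by (intro sum_eq_single) (auto simp: homotopy_coef_def \<sigma>'_def)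
  also have "homotopy_coef u \<sigma> \<sigma>' = (-1) ^ spos L \<sigma>' ?f"
    using s f y by (auto simp: homotopy_coef_def \<sigma>'_def)
  also have "qcoef \<sigma>' \<tau> = (if x0 \<in> \<tau> then dcoef L UNIV \<sigma>' \<tau> else 0)"
    using s by (simp add: qcoef_def \<sigma>'_def)
  also have "dcoef L UNIV \<sigma>' \<tau> = (if \<tau> = \<sigma> then (-1) ^ spos L \<sigma>' ?f else 0) +
      (\<Sum>x\<in>\<sigma>. if \<tau> = \<sigma>' - {x} \<and> redundant \<sigma>' x then (-1) ^ spos L \<sigma>' x else 0)"
  proof -
    have "\<sigma>' - {?f} = \<sigma>" using f by (auto simp: \<sigma>'_def)
    moreover have "join UNIV \<sigma>' = join UNIV \<sigma>" unfolding \<sigma>'_def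
      by (rule join_insert_equiv[OF s(2) y(1)])
        (simp add: res_cls[OF y(2)] res_cls[OF first_in_cls[OF u]])
    ultimately show ?thesis
      unfolding dcoef_def \<sigma>'_def using finite_simplex[OF s(1)] f by simp
  qed
  finally have "(\<Sum>\<rho>\<in>Pow A. homotopy_coef u \<sigma> \<rho> * qcoef \<rho> \<tau>) = (-1) ^ spos L \<sigma>' ?f *
      (if x0 \<in> \<tau> then (if \<tau> = \<sigma> then (-1) ^ spos L \<sigma>' ?f else 0) +
        (\<Sum>x\<in>\<sigma>. if \<tau> = \<sigma>' - {x} \<and> redundant \<sigma>' x then (-1) ^ spos L \<sigma>' x else 0) else 0)" .
  moreover have "(-1::rat) ^ spos L \<sigma>' ?f * (-1) ^ spos L \<sigma>' ?f = 1"
    by (simp flip: power_add)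
  moreover have "x0 \<notin> \<tau> \<Longrightarrow> \<tau> \<noteq> \<sigma>" using s by auto
  ultimately show ?thesis
    by (cases "x0 \<in> \<tau>") (simp_all add: distrib_left sum_distrib_left mult_if_zero)
qed

lemma homotopy_terms_cancel:
  assumes u: "u \<in> A2" and s: "\<sigma> \<subseteq> A" "x0 \<in> \<sigma>" and f: "first u \<notin> \<sigma>"
    and x: "x \<in> \<sigma>" and y: "y \<in> \<sigma>" "y \<noteq> x" "y \<in> cls u"
  defines "\<sigma>' \<equiv> insert (first u) \<sigma>"
  shows "(if x0 \<in> \<tau> \<and> \<tau> = \<sigma>' - {x} \<and> redundant \<sigma>' x
          then (-1) ^ spos L \<sigma>' (first u) * (-1) ^ spos L \<sigma>' x else 0)
       + (if redundant \<sigma> x then (-1) ^ spos L \<sigma> x * homotopy_coef u (\<sigma> - {x}) \<tau> else 0) = (0::rat)"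
proof (cases "x = x0")
  case True
  then show ?thesis by (simp add: homotopy_coef_def)
next
  case False
  let ?f = "first u"
  have fC: "?f \<in> cls u" using first_in_cls[OF u] .
  have xf: "x \<noteq> ?f" using x f by auto
  have \<sigma>'x: "\<sigma>' - {x} = insert ?f (\<sigma> - {x})" using xf by (auto simp: \<sigma>'_def)
  have "join UNIV (\<sigma>' - {x}) = join UNIV (\<sigma> - {x})" unfolding \<sigma>'x
    by (rule join_insert_equiv[of _ y]) (use s False y fC res_cls in auto)
  moreover have "join UNIV \<sigma>' = join UNIV \<sigma>" unfolding \<sigma>'_def
    by (rule join_insert_equiv[OF s(2) y(1)]) (simp add: res_cls[OF y(3)] res_cls[OF fC])
  ultimately have redundant_iff: "redundant \<sigma>' x \<longleftrightarrow> redundant \<sigma> x" by simp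
  have "homotopy_coef u (\<sigma> - {x}) \<tau> = (if \<tau> = \<sigma>' - {x} then (-1) ^ spos L (\<sigma>' - {x}) ?f else 0)"
    using s False f y by (auto simp: homotopy_coef_def \<sigma>'x)
  moreover have "(-1::rat) ^ spos L \<sigma>' ?f * (-1) ^ spos L \<sigma>' x
      + (-1) ^ spos L \<sigma> x * (-1) ^ spos L (\<sigma>' - {x}) ?f = 0"
    unfolding \<sigma>'_def using s x f first_A'[OF u] A_eq
    by (intro sign_insert_remove[OF distinct_L xf]) (auto intro: finite_simplex)
  moreover have "\<tau> = \<sigma>' - {x} \<Longrightarrow> x0 \<in> \<tau>" using s False by (auto simp: \<sigma>'_def)
  ultimately show ?thesis using redundant_iff by auto
qed

lemma homotopy_terms_single:
  assumes u: "u \<in> A2" and s: "\<sigma> \<subseteq> A" "x0 \<in> \<sigma>" and f: "first u \<notin> \<sigma>"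
    and x: "\<sigma> \<inter> cls u = {x}"
  defines "\<sigma>' \<equiv> insert (first u) \<sigma>"
  shows "(if x0 \<in> \<tau> \<and> \<tau> = \<sigma>' - {x} \<and> redundant \<sigma>' x
          then (-1) ^ spos L \<sigma>' (first u) * (-1) ^ spos L \<sigma>' x else 0)
       + (if redundant \<sigma> x then (-1) ^ spos L \<sigma> x * homotopy_coef u (\<sigma> - {x}) \<tau> else 0)
       = - (if \<tau> = \<sigma>' - {x} then 1 else (0::rat))"
proof -
  let ?f = "first u"
  have xC: "x \<in> \<sigma>" "x \<in> cls u" using x by auto
  have xf: "x \<noteq> ?f" using xC f by auto
  have "homotopy_coef u (\<sigma> - {x}) \<tau> = 0" using x by (auto simp: homotopy_coef_def)
  moreover have "insert x (\<sigma>' - {x}) = \<sigma>'" using xC by (auto simp: \<sigma>'_def)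
  moreover have "join UNIV (insert x (\<sigma>' - {x})) = join UNIV (\<sigma>' - {x})"
    by (rule join_insert_equiv[of _ ?f])
       (use s(2) xC xf x0_notin_cls res_cls[OF xC(2)] res_cls[OF first_in_cls[OF u]] in
        \<open>auto simp: \<sigma>'_def\<close>)
  moreover have "(-1::rat) ^ spos L \<sigma>' ?f * (-1) ^ spos L \<sigma>' x = -1"
  proof -
    have "spos L \<sigma>' x = Suc (spos L \<sigma>' ?f)"
      unfolding \<sigma>'_def by (rule spos_insert_first[OF u s(1) f x])
    then show ?thesis by (simp flip: power_add)
  qed
  moreover have "\<tau> = \<sigma>' - {x} \<Longrightarrow> x0 \<in> \<tau>" using s(2) xC x0_notin_cls by (auto simp: \<sigma>'_def)
  ultimately show ?thesis by auto
qed

lemma homotopy_identity_first_notin: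
  assumes u: "u \<in> A2" and s: "\<sigma> \<subseteq> A" "x0 \<in> \<sigma>" and f: "first u \<notin> \<sigma>"
    and y: "y \<in> \<sigma>" "y \<in> cls u"
  shows "(\<Sum>\<rho>\<in>Pow A. homotopy_coef u \<sigma> \<rho> * qcoef \<rho> \<tau>) + (\<Sum>\<rho>\<in>Pow A. qcoef \<sigma> \<rho> * homotopy_coef u \<rho> \<tau>)
    = (if \<tau> = \<sigma> then 1 else 0) - collapse_coef {u} \<sigma> \<tau>"
proof -
  define \<sigma>' where "\<sigma>' = insert (first u) \<sigma>"
  define T where "T x = (if x0 \<in> \<tau> \<and> \<tau> = \<sigma>' - {x} \<and> redundant \<sigma>' x
          then (-1) ^ spos L \<sigma>' (first u) * (-1) ^ spos L \<sigma>' x else 0)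
       + (if redundant \<sigma> x then (-1) ^ spos L \<sigma> x * homotopy_coef u (\<sigma> - {x}) \<tau> else (0::rat))" for x
  have cancel: "T x = 0" if "x \<in> \<sigma>" "z \<in> \<sigma>" "z \<noteq> x" "z \<in> cls u" for x z
    unfolding T_def \<sigma>'_def by (rule homotopy_terms_cancel[OF u s f that])
  have "(\<Sum>\<rho>\<in>Pow A. homotopy_coef u \<sigma> \<rho> * qcoef \<rho> \<tau>) + (\<Sum>\<rho>\<in>Pow A. qcoef \<sigma> \<rho> * homotopy_coef u \<rho> \<tau>)
      = (if \<tau> = \<sigma> then 1 else 0) + sum T \<sigma>"
    unfolding homotopy_coef_qcoef_sum[OF u s f y] qcoef_homotopy_coef_sum[OF s] T_def \<sigma>'_def
    by (simp add: sum.distrib)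
  moreover have "sum T \<sigma> = - collapse_coef {u} \<sigma> \<tau>"
  proof (cases "single_in \<sigma> u")
    case True
    then have x: "\<sigma> \<inter> cls u = {y}" using y unfolding single_in_def by blast
    have "sum T \<sigma> = T y"
      using cancel y by (intro sum_eq_single[OF finite_simplex[OF s(1)] y(1)]) blast
    also have "\<dots> = - (if \<tau> = \<sigma>' - {y} then 1 else 0)"
      unfolding T_def \<sigma>'_def by (rule homotopy_terms_single[OF u s f x])
    also have "collapse {u} ` \<sigma> = \<sigma>' - {y}"
      using x f by (auto simp: collapse_singleton \<sigma>'_def)
    ultimately show ?thesis using True s by (simp add: collapse_coef_def)
  next
    case False
    then obtain z z' where "z \<in> \<sigma>" "z' \<in> \<sigma>" "z \<in> cls u" "z' \<in> cls u" "z \<noteq> z'"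
      unfolding single_in_def by blast
    then have "sum T \<sigma> = 0" using cancel by (metis sum.neutral)
    then show ?thesis using False by (simp add: collapse_coef_def)
  qed
  ultimately show ?thesis by simp
qed

lemma homotopy_coef_identity:
  assumes u: "u \<in> A2" and s: "\<sigma> \<subseteq> A" "x0 \<in> \<sigma>"
  shows "(\<Sum>\<rho>\<in>Pow A. homotopy_coef u \<sigma> \<rho> * qcoef \<rho> \<tau>) + (\<Sum>\<rho>\<in>Pow A. qcoef \<sigma> \<rho> * homotopy_coef u \<rho> \<tau>)
    = (if \<tau> = \<sigma> then 1 else 0) - collapse_coef {u} \<sigma> \<tau>"
proof (cases "\<sigma> \<inter> cls u = {}")
  case True
  then show ?thesis by (rule homotopy_identity_disjoint[OF s])
next
  case False
  then obtain y where "y \<in> \<sigma>" "y \<in> cls u" by blast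
  then show ?thesis
    using homotopy_identity_first_mem[OF u s] homotopy_identity_first_notin[OF u s] by blast
qed

lemma homotopy_map_identity:
  assumes u: "u \<in> A2" and b: "b \<in> qcochains"
  shows "(\<lambda>\<tau>. qdif (homotopy_map u b) \<tau> + homotopy_map u (qdif b) \<tau>) =
    (\<lambda>\<tau>. b \<tau> - collapse_map {u} b \<tau>)"
proof -
  have "(\<lambda>\<tau>. qdif (homotopy_map u b) \<tau> + homotopy_map u (qdif b) \<tau>) =
      linmap A (\<lambda>\<sigma> \<tau>. (\<Sum>\<rho>\<in>Pow A. homotopy_coef u \<sigma> \<rho> * qcoef \<rho> \<tau>) +
        (\<Sum>\<rho>\<in>Pow A. qcoef \<sigma> \<rho> * homotopy_coef u \<rho> \<tau>)) b"
    by (simp add: linmap_add_matrix linmap_comp)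
  also have "\<dots> = linmap A (\<lambda>\<sigma> \<tau>. (if \<tau> = \<sigma> then 1 else 0) - collapse_coef {u} \<sigma> \<tau>) b"
    using b by (intro ext linmap_cong homotopy_coef_identity[OF u]) (auto simp: qcochains_def)
  also have "\<dots> = (\<lambda>\<tau>. b \<tau> - collapse_map {u} b \<tau>)"
    using b by (intro linmap_id_diff) (auto simp: qcochains_def)
  finally show ?thesis .
qed

definition is_homotopy :: "'n csub set \<Rightarrow> (('n csub set \<Rightarrow> rat) \<Rightarrow> ('n csub set \<Rightarrow> rat)) \<Rightarrow> bool" where
  "is_homotopy S H \<longleftrightarrow> (\<forall>c\<in>qcochains. H c \<in> qcochains \<and>
       (\<lambda>\<tau>. qdif (H c) \<tau> + H (qdif c) \<tau>) = (\<lambda>\<tau>. c \<tau> - collapse_map S c \<tau>))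
     \<and> H (\<lambda>_. 0) = (\<lambda>_. 0) \<and> (\<forall>k. \<forall>c\<in>qhcochains k. H c \<in> qhcochains (k - 1))"

lemma qdif_collapse_map:
  assumes H: "is_homotopy S H" and c: "c \<in> qcochains"
  shows "qdif (collapse_map S c) = collapse_map S (qdif c)"
proof -
  have e1: "(\<lambda>\<tau>. qdif (H c) \<tau> + H (qdif c) \<tau>) = (\<lambda>\<tau>. c \<tau> - collapse_map S c \<tau>)"
    using H c by (simp add: is_homotopy_def)
  have e2: "(\<lambda>\<tau>. qdif (H (qdif c)) \<tau> + H (qdif (qdif c)) \<tau>) =
      (\<lambda>\<tau>. qdif c \<tau> - collapse_map S (qdif c) \<tau>)"
    using H qdif_qcochains[OF c] by (simp add: is_homotopy_def)
  have H0: "H (qdif (qdif c)) = (\<lambda>_. 0)" using H by (simp add: is_homotopy_def qdif_qdif)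
  have "collapse_map S c = (\<lambda>\<tau>. c \<tau> - qdif (H c) \<tau> - H (qdif c) \<tau>)"
  proof
    fix \<tau> show "collapse_map S c \<tau> = c \<tau> - qdif (H c) \<tau> - H (qdif c) \<tau>"
      using fun_cong[OF e1, of \<tau>] by simp
  qed
  then have "qdif (collapse_map S c) = (\<lambda>\<tau>. qdif c \<tau> - qdif (H (qdif c)) \<tau>)"
    by (simp add: linmap_diff qdif_qdif)
  also have "\<dots> = collapse_map S (qdif c)"
  proof
    fix \<tau> show "qdif c \<tau> - qdif (H (qdif c)) \<tau> = collapse_map S (qdif c) \<tau>"
      using fun_cong[OF e2, of \<tau>] H0 by simp
  qed
  finally show ?thesis .
qed

lemma is_homotopy_empty: "is_homotopy {} (\<lambda>_ _. 0)"
  by (simp add: is_homotopy_def collapse_map_empty linmap_zero qcochains_def qhcochains_def)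

lemma is_homotopy_insert:
  assumes H: "is_homotopy S H" and u: "u \<in> A2" "u \<notin> S"
  shows "is_homotopy (insert u S) (\<lambda>c \<tau>. H c \<tau> + homotopy_map u (collapse_map S c) \<tau>)"
  unfolding is_homotopy_def
proof (intro conjI ballI allI)
  fix c assume c: "c \<in> qcochains"
  have Rc: "collapse_map S c \<in> qcochains" using collapse_map_qcochains[OF c] .
  show "(\<lambda>\<tau>. H c \<tau> + homotopy_map u (collapse_map S c) \<tau>) \<in> qcochains"
    using H c by (intro qcochains_add homotopy_map_qcochains[OF u(1) Rc])
      (simp add: is_homotopy_def)
  have e1: "(\<lambda>\<tau>. qdif (H c) \<tau> + H (qdif c) \<tau>) = (\<lambda>\<tau>. c \<tau> - collapse_map S c \<tau>)"
    using H c by (simp add: is_homotopy_def)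
  have e2: "(\<lambda>\<tau>. qdif (homotopy_map u (collapse_map S c)) \<tau> +
      homotopy_map u (qdif (collapse_map S c)) \<tau>) =
      (\<lambda>\<tau>. collapse_map S c \<tau> - collapse_map (insert u S) c \<tau>)"
    using homotopy_map_identity[OF u(1) Rc] collapse_map_insert[OF u(2)] by simp
  show "(\<lambda>\<tau>. qdif (\<lambda>\<tau>. H c \<tau> + homotopy_map u (collapse_map S c) \<tau>) \<tau> +
      (H (qdif c) \<tau> + homotopy_map u (collapse_map S (qdif c)) \<tau>)) =
      (\<lambda>\<tau>. c \<tau> - collapse_map (insert u S) c \<tau>)"
  proof
    fix \<tau>
    have "qdif (H c) \<tau> + H (qdif c) \<tau> = c \<tau> - collapse_map S c \<tau>"
      using fun_cong[OF e1, of \<tau>] by simp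
    moreover have "qdif (homotopy_map u (collapse_map S c)) \<tau> +
        homotopy_map u (collapse_map S (qdif c)) \<tau> = collapse_map S c \<tau> - collapse_map (insert u S) c \<tau>"
      using fun_cong[OF e2, of \<tau>] qdif_collapse_map[OF H c] by simp
    ultimately show "qdif (\<lambda>\<tau>. H c \<tau> + homotopy_map u (collapse_map S c) \<tau>) \<tau> +
        (H (qdif c) \<tau> + homotopy_map u (collapse_map S (qdif c)) \<tau>) =
        c \<tau> - collapse_map (insert u S) c \<tau>"
      by (simp add: linmap_add)
  qed
next
  show "(\<lambda>\<tau>. H (\<lambda>_. 0) \<tau> + homotopy_map u (collapse_map S (\<lambda>_. 0)) \<tau>) = (\<lambda>_. 0)"
    using H by (simp add: is_homotopy_def linmap_zero)
next
  fix k c assume c: "c \<in> qhcochains k"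
  have "homotopy_map u (collapse_map S c) \<in> qhcochains (k - 1)"
    using homotopy_map_qhcochains[OF u(1) collapse_map_qhcochains[OF c]] .
  then show "(\<lambda>\<tau>. H c \<tau> + homotopy_map u (collapse_map S c) \<tau>) \<in> qhcochains (k - 1)"
    using H c by (intro qhcochains_add) (simp_all add: is_homotopy_def)
qed

lemma homotopy_exists:
  assumes "S \<subseteq> A2"
  shows "\<exists>H. is_homotopy S H"
proof -
  have "finite S" using assms finite_subset by blast
  then show ?thesis using assms
    by (induction S rule: finite_induct) (use is_homotopy_empty is_homotopy_insert in blast)+
qed

end

section \<open>The map \<open>\<phi>\<close>\<close>

context deletion_restriction
begin

definition transversal :: "'n csub set \<Rightarrow> bool" where
  "transversal \<sigma> \<longleftrightarrow> x0 \<in> \<sigma> \<and> \<not> (\<exists>y\<in>\<sigma> - {x0}. \<exists>z\<in>\<sigma> - {x0}. y \<noteq> z \<and> sim x0 y z)"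

lemma phicoef_eq:
  "phicoef L \<sigma> \<tau> = (if transversal \<sigma> \<and> \<tau> = res ` (\<sigma> - {x0}) then (-1) ^ (card \<sigma> - 1) else 0)"
  unfolding phicoef_def transversal_def res_eta by simp

lemma transversal_inj_on_res: "transversal \<sigma> \<Longrightarrow> inj_on res (\<sigma> - {x0})"
  unfolding transversal_def inj_on_def sim_iff_res by blast

lemma transversal_subset: "transversal \<sigma> \<Longrightarrow> x0 \<in> \<sigma>' \<Longrightarrow> \<sigma>' \<subseteq> \<sigma> \<Longrightarrow> transversal \<sigma>'"
  unfolding transversal_def by blast

lemma card_res_transversal:
  assumes "transversal \<sigma>" "\<sigma> \<subseteq> A"
  shows "card (res ` (\<sigma> - {x0})) = card \<sigma> - 1" "card \<sigma> \<ge> 1"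
proof -
  have f: "finite \<sigma>" using finite_simplex assms(2) by blast
  have x: "x0 \<in> \<sigma>" using assms(1) transversal_def by blast
  show "card (res ` (\<sigma> - {x0})) = card \<sigma> - 1"
    using card_image[OF transversal_inj_on_res[OF assms(1)]] f x by simp
  show "card \<sigma> \<ge> 1" using f x card_gt_0_iff[of \<sigma>] by auto
qed

lemma sdeg_res_transversal:
  assumes "transversal \<sigma>" "\<sigma> \<subseteq> A"
  shows "sdeg x0 (res ` (\<sigma> - {x0})) = sdeg UNIV \<sigma> - shift"
proof -
  have x: "x0 \<in> \<sigma>" using assms(1) transversal_def by blast
  have j: "join x0 (res ` (\<sigma> - {x0})) = join UNIV \<sigma>" by (rule join_x0_res[OF x])
  have sub: "join UNIV \<sigma> \<subseteq> x0" using x by (auto simp: join_def)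
  have d1: "vec.dim (join UNIV \<sigma>) \<le> vec.dim x0" using vec.dim_subset[OF sub] .
  have d2: "vec.dim x0 \<le> vec.dim (UNIV :: (complex ^ 'n) set)" using vec.dim_subset by blast
  show ?thesis unfolding sdeg_def ccodim_def j card_res_transversal[OF assms]
    using d1 d2 card_res_transversal(2)[OF assms] by (simp add: of_nat_diff)
qed

lemma phicoef_nonzeroD:
  assumes "\<sigma> \<subseteq> A" "phicoef L \<sigma> \<tau> \<noteq> 0"
  shows "transversal \<sigma>" "\<tau> = res ` (\<sigma> - {x0})" "\<tau> \<subseteq> A2"
proof -
  show g: "transversal \<sigma>" and t: "\<tau> = res ` (\<sigma> - {x0})"
    using assms(2) by (simp_all add: phicoef_eq split: if_splits)
  have "\<sigma> - {x0} \<subseteq> A'" using assms(1) A_eq by blast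
  thus "\<tau> \<subseteq> A2" unfolding t A2_eq by blast
qed

lemma phi_vanishes_on_A':
  assumes "c \<in> cochains A'"
  shows "phi L c = (\<lambda>_. 0)"
  unfolding phi_def using assms x0_notin
  by (intro ext sum.neutral) (auto simp: cochains_def phicoef_eq transversal_def)

lemma phi_hcochains:
  assumes "c \<in> hcochains UNIV A k"
  shows "phi L c \<in> hcochains x0 A2 (k - shift)"
  unfolding hcochains_def cochains_def
proof (intro CollectI conjI allI impI)
  fix \<tau> assume "phi L c \<tau> \<noteq> 0"
  then obtain \<sigma> where s: "\<sigma> \<subseteq> A" "c \<sigma> \<noteq> 0" "phicoef L \<sigma> \<tau> \<noteq> 0" unfolding phi_linmap
    using linmap_nonzeroD by blast
  have g: "transversal \<sigma>" "\<tau> = res ` (\<sigma> - {x0})" "\<tau> \<subseteq> A2" using phicoef_nonzeroD[OF s(1,3)] by auto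
  show "\<tau> \<subseteq> A2" using g(3) .
  have "sdeg UNIV \<sigma> = k" using assms s(2) by (simp add: hcochains_def)
  thus "sdeg x0 \<tau> = k - shift"
    using sdeg_res_transversal[OF g(1) s(1)] g(2) by simp
qed

lemma spos_res:
  assumes g: "transversal \<sigma>" and s: "\<sigma> \<subseteq> A" and x: "x \<in> \<sigma>" "x \<noteq> x0"
  shows "spos (tA2 L) (res ` (\<sigma> - {x0})) (res x) = spos L \<sigma> x - 1"
proof -
  have f: "finite \<sigma>" using finite_simplex s by blast
  have xA: "x \<in> A'" using x s A_eq by blast
  have sA: "\<And>w. w \<in> \<sigma> - {x0} \<Longrightarrow> w \<in> A'" using s A_eq by blast
  have neq: "\<And>w. w \<in> \<sigma> - {x0} \<Longrightarrow> w \<noteq> x \<Longrightarrow> res w \<noteq> res x"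
    using g x unfolding transversal_def sim_iff_res by blast
  have e1: "{v \<in> res ` (\<sigma> - {x0}). lless (tA2 L) v (res x)} = res ` {w \<in> \<sigma> - {x0}. lless L w x}"
  proof (intro set_eqI iffI)
    fix v assume "v \<in> {v \<in> res ` (\<sigma> - {x0}). lless (tA2 L) v (res x)}"
    then obtain w where w: "w \<in> \<sigma> - {x0}" "v = res w" "lless (tA2 L) (res w) (res x)" by blast
    have "w \<noteq> x" using w(3) lless_irrefl[OF distinct_tA2] by blast
    hence "lless L w x" using lless_tA2_iff[OF sA[OF w(1)] xA neq[OF w(1)]] w(3) by simp
    thus "v \<in> res ` {w \<in> \<sigma> - {x0}. lless L w x}" using w by blast
  next
    fix v assume "v \<in> res ` {w \<in> \<sigma> - {x0}. lless L w x}"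
    then obtain w where w: "w \<in> \<sigma> - {x0}" "v = res w" "lless L w x" by blast
    have "w \<noteq> x" using w(3) lless_irrefl[OF distinct_L] by blast
    hence "lless (tA2 L) (res w) (res x)"
      using lless_tA2_iff[OF sA[OF w(1)] xA neq[OF w(1)]] w(3) by simp
    thus "v \<in> {v \<in> res ` (\<sigma> - {x0}). lless (tA2 L) v (res x)}" using w by blast
  qed
  have c1: "card (res ` {w \<in> \<sigma> - {x0}. lless L w x}) = card {w \<in> \<sigma> - {x0}. lless L w x}"
    by (rule card_image) (rule inj_on_subset[OF transversal_inj_on_res[OF g]], blast)
  have x0s: "x0 \<in> \<sigma>" using g by (simp add: transversal_def)
  have e2: "{w \<in> \<sigma>. lless L w x} = insert x0 {w \<in> \<sigma> - {x0}. lless L w x}"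
  proof (intro set_eqI iffI)
    fix w assume "w \<in> {w \<in> \<sigma>. lless L w x}" thus "w \<in> insert x0 {w \<in> \<sigma> - {x0}. lless L w x}"
      by blast
  next
    fix w assume "w \<in> insert x0 {w \<in> \<sigma> - {x0}. lless L w x}"
    thus "w \<in> {w \<in> \<sigma>. lless L w x}" using x0s lless_x0[OF xA] by blast
  qed
  have c2: "card {w \<in> \<sigma>. lless L w x} = Suc (card {w \<in> \<sigma> - {x0}. lless L w x})"
    unfolding e2 using f by simp
  show ?thesis unfolding spos_def e1 c1 c2 by simp
qed

lemma transversal_iff: "transversal \<sigma> \<longleftrightarrow> x0 \<in> \<sigma> \<and> inj_on res (\<sigma> - {x0})"
  unfolding transversal_def inj_on_def sim_iff_res by blast

lemma transversal_swap:
  assumes "y \<noteq> z" "res y = res z" "y \<in> \<sigma> - {x0}" "z \<in> \<sigma> - {x0}" "transversal (\<sigma> - {y})"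
  shows "transversal (\<sigma> - {z})"
  unfolding transversal_iff
proof
  have inj: "inj_on res (\<sigma> - {y} - {x0})" using assms(5) by (simp add: transversal_iff)
  show "inj_on res (\<sigma> - {z} - {x0})"
  proof (rule inj_onI)
    fix a b assume ab: "a \<in> \<sigma> - {z} - {x0}" "b \<in> \<sigma> - {z} - {x0}" "res a = res b"
    have swap: "(if w = y then z else w) \<in> \<sigma> - {y} - {x0}" "res (if w = y then z else w) = res w"
      if "w \<in> \<sigma> - {z} - {x0}" for w
      using that assms(1-4) by auto
    have "(if a = y then z else a) = (if b = y then z else b)"
      using inj_onD[OF inj _ swap(1)[OF ab(1)] swap(1)[OF ab(2)]] swap(2)[OF ab(1)] swap(2)[OF ab(2)]
        ab(3)
      by simp
    then show "a = b" using ab by (simp split: if_splits)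
  qed
qed (use assms(4,5) in \<open>auto simp: transversal_def\<close>)

lemma dcoef_phicoef_term:
  assumes g: "transversal \<sigma>" and s: "\<sigma> \<subseteq> A" and x: "x \<in> \<sigma>" "x \<noteq> x0"
  defines "\<rho>0 \<equiv> res ` (\<sigma> - {x0})"
  shows "(if redundant \<sigma> x then (-1) ^ spos L \<sigma> x * phicoef L (\<sigma> - {x}) \<tau> else 0) =
    (-1) ^ (card \<sigma> - 1) * (if \<tau> = \<rho>0 - {res x} \<and> join x0 (\<rho>0 - {res x}) = join x0 \<rho>0
      then (-1) ^ spos (tA2 L) \<rho>0 (res x) else 0)"
proof -
  have f: "finite \<sigma>" using finite_simplex s by blast
  have x0: "x0 \<in> \<sigma>" using g by (simp add: transversal_def)
  have xA: "x \<in> A'" using x s A_eq by blast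
  have im: "\<rho>0 - {res x} = res ` ((\<sigma> - {x}) - {x0})"
    using g x unfolding \<rho>0_def transversal_def sim_iff_res by blast
  have "join x0 (\<rho>0 - {res x}) = join UNIV (\<sigma> - {x})"
    unfolding im by (rule join_x0_res) (use x x0 in blast)
  moreover have "join x0 \<rho>0 = join UNIV \<sigma>" unfolding \<rho>0_def by (rule join_x0_res[OF x0])
  moreover have "phicoef L (\<sigma> - {x}) \<tau> =
      (if \<tau> = res ` ((\<sigma> - {x}) - {x0}) then (-1) ^ (card \<sigma> - 2) else 0)"
  proof -
    have "transversal (\<sigma> - {x})" by (rule transversal_subset[OF g]) (use x x0 in auto)
    moreover have "card (\<sigma> - {x}) - 1 = card \<sigma> - 2" using f x by simp
    ultimately show ?thesis by (simp add: phicoef_eq)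
  qed
  moreover have "spos (tA2 L) \<rho>0 (res x) = spos L \<sigma> x - 1"
    unfolding \<rho>0_def by (rule spos_res[OF g s x])
  moreover have "(-1::rat) ^ spos L \<sigma> x * (-1) ^ (card \<sigma> - 2) =
      (-1) ^ (card \<sigma> - 1) * (-1) ^ (spos L \<sigma> x - 1)"
  proof -
    have "spos L \<sigma> x \<ge> 2" using spos_remove(2)[OF f x0 lless_x0[OF xA]] .
    moreover have "card {x0, x} \<le> card \<sigma>" using f x x0 by (intro card_mono) auto
    ultimately have "spos L \<sigma> x + (card \<sigma> - 2) = (card \<sigma> - 1) + (spos L \<sigma> x - 1)"
      using x by simp
    then show ?thesis by (simp flip: power_add)
  qed
  ultimately show ?thesis unfolding im by auto
qed

lemma phicoef_dcoef_transversal: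
  assumes g: "transversal \<sigma>" and s: "\<sigma> \<subseteq> A"
  shows "(\<Sum>\<rho>\<in>Pow A. dcoef L UNIV \<sigma> \<rho> * phicoef L \<rho> \<tau>) =
    (-1) ^ (card \<sigma> - 1) * dcoef (tA2 L) x0 (res ` (\<sigma> - {x0})) \<tau>"
proof -
  define F where "F x = (if redundant \<sigma> x then (-1) ^ spos L \<sigma> x * phicoef L (\<sigma> - {x}) \<tau> else 0)"
    for x
  have x0: "x0 \<in> \<sigma>" using g by (simp add: transversal_def)
  have "(\<Sum>\<rho>\<in>Pow A. dcoef L UNIV \<sigma> \<rho> * phicoef L \<rho> \<tau>) = sum F \<sigma>"
    unfolding F_def by (rule dcoef_sum[OF s])
  also have "\<dots> = sum F (\<sigma> - {x0})"
    using sum.remove[OF finite_simplex[OF s] x0, of F]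
      by (simp add: F_def phicoef_eq transversal_def)
  also have "\<dots> = (-1) ^ (card \<sigma> - 1) * dcoef (tA2 L) x0 (res ` (\<sigma> - {x0})) \<tau>"
    unfolding dcoef_def sum.reindex[OF transversal_inj_on_res[OF g]] sum_distrib_left
    using dcoef_phicoef_term[OF g s] by (intro sum.cong) (auto simp: F_def)
  finally show ?thesis .
qed

lemma dcoef_phicoef_pair_cancel:
  assumes s: "\<sigma> \<subseteq> A" "x0 \<in> \<sigma>" and yz: "y \<in> \<sigma> - {x0}" "z \<in> \<sigma> - {x0}" "y \<noteq> z"
    "res y = res z" "lless L y z"
  shows "(if redundant \<sigma> y then (-1) ^ spos L \<sigma> y * phicoef L (\<sigma> - {y}) \<tau> else 0) +
    (if redundant \<sigma> z then (-1) ^ spos L \<sigma> z * phicoef L (\<sigma> - {z}) \<tau> else 0) = (0::rat)"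
proof (cases "transversal (\<sigma> - {y})")
  case False
  then have "\<not> transversal (\<sigma> - {z})" using transversal_swap[of z y \<sigma>] yz by metis
  with False show ?thesis by (simp add: phicoef_eq)
next
  case True
  have gz: "transversal (\<sigma> - {z})" using transversal_swap[OF yz(3,4,1,2) True] .
  have "join UNIV (insert y (\<sigma> - {y})) = join UNIV (\<sigma> - {y})"
    by (rule join_insert_equiv[of _ z]) (use yz s in auto)
  moreover have "join UNIV (insert z (\<sigma> - {z})) = join UNIV (\<sigma> - {z})"
    by (rule join_insert_equiv[of _ y]) (use yz s in auto)
  ultimately have "redundant \<sigma> y" "redundant \<sigma> z" using yz by (simp_all add: insert_absorb)
  moreover have "phicoef L (\<sigma> - {y}) \<tau> = phicoef L (\<sigma> - {z}) \<tau>"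
  proof -
    have "res ` (\<sigma> - {y} - {x0}) = res ` (\<sigma> - {z} - {x0})" using yz by (auto simp: image_iff)
    then show ?thesis using True gz yz finite_simplex[OF s(1)] by (simp add: phicoef_eq)
  qed
  moreover have "spos L \<sigma> z = Suc (spos L \<sigma> y)"
  proof (rule spos_successor[OF finite_simplex[OF s(1)] _ yz(5) distinct_L])
    show "y \<in> \<sigma>" using yz by blast
  next
    fix w assume w: "w \<in> \<sigma>" "lless L y w" "lless L w z"
    have "y \<in> A'" using yz s A_eq by blast
    then have "res y = res w" using contiguous_classes w(2,3) yz(4) by metis
    moreover have "w \<noteq> x0" "w \<noteq> y" "w \<noteq> z"
      using w not_lless_x0 lless_irrefl[OF distinct_L] by blast+
    ultimately have "\<not> transversal (\<sigma> - {z})"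
      using w(1) yz unfolding transversal_def sim_iff_res by blast
    then show False using gz by simp
  qed
  ultimately show ?thesis by simp
qed

lemma phicoef_dcoef_not_transversal:
  assumes s: "\<sigma> \<subseteq> A" and ng: "\<not> transversal \<sigma>"
  shows "(\<Sum>\<rho>\<in>Pow A. dcoef L UNIV \<sigma> \<rho> * phicoef L \<rho> \<tau>) = 0"
proof -
  define F where "F x = (if redundant \<sigma> x then (-1) ^ spos L \<sigma> x * phicoef L (\<sigma> - {x}) \<tau> else 0)"
    for x
  have sum: "(\<Sum>\<rho>\<in>Pow A. dcoef L UNIV \<sigma> \<rho> * phicoef L \<rho> \<tau>) = sum F \<sigma>"
    unfolding F_def by (rule dcoef_sum[OF s])
  show ?thesis
  proof (cases "x0 \<in> \<sigma>")
    case False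
    then show ?thesis unfolding sum F_def
      by (intro sum.neutral) (simp add: phicoef_eq transversal_def)
  next
    case x0: True
    obtain y z where yz: "y \<in> \<sigma> - {x0}" "z \<in> \<sigma> - {x0}" "y \<noteq> z" "res y = res z" "lless L y z"
    proof -
      obtain y z where "y \<in> \<sigma> - {x0}" "z \<in> \<sigma> - {x0}" "y \<noteq> z" "res y = res z"
        using ng x0 unfolding transversal_def sim_iff_res by blast
      moreover have "y \<in> A" "z \<in> A" using calculation s by auto
      ultimately show ?thesis
        using that[of y z] that[of z y] lless_total[OF distinct_L] by metis
    qed
    have "F x = 0" if "x \<in> \<sigma>" "x \<noteq> y" "x \<noteq> z" for x
    proof -
      have "\<not> transversal (\<sigma> - {x})" using yz that unfolding transversal_def sim_iff_res by blast
      then show ?thesis unfolding F_def by (simp add: phicoef_eq)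
    qed
    then have "sum F \<sigma> = F y + F z"
      using yz sum.mono_neutral_right[OF finite_simplex[OF s], of "{y, z}" F] by auto
    also have "\<dots> = 0" unfolding F_def by (rule dcoef_phicoef_pair_cancel[OF s x0 yz])
    finally show ?thesis using sum by simp
  qed
qed

lemma phicoef_dcoef:
  assumes s: "\<sigma> \<subseteq> A"
  shows "(\<Sum>\<rho>\<in>Pow A. dcoef L UNIV \<sigma> \<rho> * phicoef L \<rho> \<tau>) =
    (\<Sum>\<rho>\<in>Pow A2. phicoef L \<sigma> \<rho> * dcoef (tA2 L) x0 \<rho> \<tau>)"
proof -
  have "res ` (\<sigma> - {x0}) \<in> Pow A2" using s A_eq unfolding A2_eq by blast
  then have "(\<Sum>\<rho>\<in>Pow A2. phicoef L \<sigma> \<rho> * dcoef (tA2 L) x0 \<rho> \<tau>) =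
      phicoef L \<sigma> (res ` (\<sigma> - {x0})) * dcoef (tA2 L) x0 (res ` (\<sigma> - {x0})) \<tau>"
    by (intro sum_eq_single) (simp_all add: phicoef_eq)
  then show ?thesis
    using phicoef_dcoef_transversal[OF _ s] phicoef_dcoef_not_transversal[OF s]
    by (cases "transversal \<sigma>") (simp_all add: phicoef_eq)
qed

lemma phi_dif: "phi L (dif L UNIV c) = dif (tA2 L) x0 (phi L c)"
proof -
  have "phi L (dif L UNIV c) = linmap A (\<lambda>\<sigma> \<tau>. \<Sum>\<rho>\<in>Pow A. dcoef L UNIV \<sigma> \<rho> * phicoef L \<rho> \<tau>) c"
    unfolding phi_linmap dif_linmap by (rule linmap_comp)
  also have "\<dots> = linmap A (\<lambda>\<sigma> \<tau>. \<Sum>\<rho>\<in>Pow A2. phicoef L \<sigma> \<rho> * dcoef (tA2 L) x0 \<rho> \<tau>) c"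
    by (rule ext, rule linmap_cong) (rule phicoef_dcoef)
  also have "\<dots> = dif (tA2 L) x0 (phi L c)"
    unfolding phi_linmap dif_linmap by (rule linmap_comp[symmetric])
  finally show ?thesis .
qed

lemma phi_restrict_x0: "phi L (restrict_x0 c) = phi L c"
  unfolding phi_def restrict_x0_def by (intro ext sum.cong) (auto simp: phicoef_eq transversal_def)

lemma phi_qdif: "phi L (qdif c) = phi L (dif L UNIV c)"
  by (simp add: qdif_eq phi_restrict_x0)

end

section \<open>A lift of \<open>D(\<A>'')\<close> into the quotient\<close>

text \<open>\<open>lift_map\<close> is a right inverse of \<open>\<phi>\<close>, and \<open>lift_map \<circ> \<phi>\<close> is the collapse onto first
  elements, which is homotopic to the identity.\<close>

context deletion_restriction
begin

definition lift_coef :: "'n csub set \<Rightarrow> 'n csub set \<Rightarrow> rat" where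
  "lift_coef \<tau> \<sigma> = (if \<tau> \<subseteq> A2 \<and> \<sigma> = insert x0 (first ` \<tau>) then (-1) ^ card \<tau> else 0)"

abbreviation "lift_map \<equiv> linmap A2 lift_coef"

lemma inj_on_first: "inj_on first A2"
  by (rule inj_on_inverseI[of _ res]) (rule res_first)

lemma lift_simplex:
  assumes t: "\<tau> \<subseteq> A2"
  shows "transversal (insert x0 (first ` \<tau>))" "res ` (insert x0 (first ` \<tau>) - {x0}) = \<tau>"
    "insert x0 (first ` \<tau>) \<subseteq> A" "card (insert x0 (first ` \<tau>)) = card \<tau> + 1"
proof -
  have fA: "first ` \<tau> \<subseteq> A'" using t first_A' by blast
  have nx: "x0 \<notin> first ` \<tau>" using fA x0_notin by blast
  have e: "insert x0 (first ` \<tau>) - {x0} = first ` \<tau>" using nx by simp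
  have ft: "finite \<tau>" using t finite_subset by blast
  show "res ` (insert x0 (first ` \<tau>) - {x0}) = \<tau>" unfolding e image_image
    using res_first t by (intro image_eq_self) auto
  show "transversal (insert x0 (first ` \<tau>))" unfolding transversal_def sim_iff_res e
  proof (intro conjI notI)
    show "x0 \<in> insert x0 (first ` \<tau>)" by simp
  next
    assume "\<exists>y\<in>first ` \<tau>. \<exists>z\<in>first ` \<tau>. y \<noteq> z \<and> res y = res z"
    then obtain a b where "a \<in> \<tau>" "b \<in> \<tau>" "first a \<noteq> first b" "res (first a) = res (first b)"
      by blast
    thus False using res_first t by (metis subsetD)
  qed
  show "insert x0 (first ` \<tau>) \<subseteq> A" using fA A_eq by blast
  have "card (first ` \<tau>) = card \<tau>" using card_image[OF inj_on_subset[OF inj_on_first t]] .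
  thus "card (insert x0 (first ` \<tau>)) = card \<tau> + 1" using nx ft by simp
qed

lemma lift_coef_nonzeroD:
  assumes "\<tau> \<subseteq> A2" "lift_coef \<tau> \<sigma> \<noteq> 0"
  shows "\<sigma> \<subseteq> A \<and> x0 \<in> \<sigma> \<and> sdeg UNIV \<sigma> = sdeg x0 \<tau> + shift"
proof -
  have e: "\<sigma> = insert x0 (first ` \<tau>)" using assms(2) by (simp add: lift_coef_def split: if_splits)
  have "sdeg x0 (res ` (\<sigma> - {x0})) = sdeg UNIV \<sigma> - shift"
    unfolding e by (rule sdeg_res_transversal[OF lift_simplex(1,3)[OF assms(1)]])
  thus ?thesis using lift_simplex[OF assms(1)] e by simp
qed

lemma phi_lift_map:
  assumes z: "z \<in> cochains A2"
  shows "phi L (lift_map z) = z"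
proof -
  have "phi L (lift_map z) = linmap A2 (\<lambda>\<tau>' \<tau>. \<Sum>\<rho>\<in>Pow A. lift_coef \<tau>' \<rho> * phicoef L \<rho> \<tau>) z"
    unfolding phi_linmap by (rule linmap_comp)
  also have "\<dots> = linmap A2 (\<lambda>\<tau>' \<tau>. if \<tau> = \<tau>' then 1 else 0) z"
  proof (rule ext, rule linmap_cong)
    fix \<tau>' \<tau> assume t: "\<tau>' \<subseteq> A2"
    define \<rho>0 where "\<rho>0 = insert x0 (first ` \<tau>')"
    have r0: "\<rho>0 \<in> Pow A" using lift_simplex(3)[OF t] \<rho>0_def by simp
    have "(\<Sum>\<rho>\<in>Pow A. lift_coef \<tau>' \<rho> * phicoef L \<rho> \<tau>) = lift_coef \<tau>' \<rho>0 * phicoef L \<rho>0 \<tau>"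
      by (rule sum_eq_single[OF _ r0]) (simp_all add: lift_coef_def \<rho>0_def)
    also have "\<dots> = (-1) ^ card \<tau>' * (if \<tau> = \<tau>' then (-1) ^ card \<tau>' else 0)"
      unfolding \<rho>0_def using lift_simplex[OF t] t by (simp add: lift_coef_def phicoef_eq)
    also have "\<dots> = (if \<tau> = \<tau>' then 1 else 0)" by (simp add: power_add[symmetric])
    finally show "(\<Sum>\<rho>\<in>Pow A. lift_coef \<tau>' \<rho> * phicoef L \<rho> \<tau>) = (if \<tau> = \<tau>' then 1 else 0)" .
  qed
  also have "\<dots> = z"
    by (rule ext, rule linmap_id) (use z in \<open>auto simp: cochains_def\<close>)
  finally show ?thesis .
qed

lemma transversal_iff_single_in:
  assumes s: "\<sigma> \<subseteq> A" "x0 \<in> \<sigma>"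
  shows "transversal \<sigma> \<longleftrightarrow> (\<forall>u\<in>A2. single_in \<sigma> u)"
proof
  assume g: "transversal \<sigma>"
  show "\<forall>u\<in>A2. single_in \<sigma> u" unfolding single_in_def
  proof (intro ballI impI)
    fix u y z assume "y \<in> \<sigma>" "z \<in> \<sigma>" "y \<in> cls u" "z \<in> cls u"
    moreover hence "y \<noteq> x0" "z \<noteq> x0" "res y = res z" using x0_notin_cls res_cls by metis+
    ultimately show "y = z" using g unfolding transversal_def sim_iff_res by blast
  qed
next
  assume a: "\<forall>u\<in>A2. single_in \<sigma> u"
  show "transversal \<sigma>" unfolding transversal_def sim_iff_res
  proof (intro conjI notI)
    show "x0 \<in> \<sigma>" using s by simp
  next
    assume "\<exists>y\<in>\<sigma> - {x0}. \<exists>z\<in>\<sigma> - {x0}. y \<noteq> z \<and> res y = res z"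
    then obtain y z where yz: "y \<in> \<sigma> - {x0}" "z \<in> \<sigma> - {x0}" "y \<noteq> z" "res y = res z" by blast
    have yA: "y \<in> A'" "z \<in> A'" using yz s A_eq by blast+
    have "y \<in> cls (res y)" "z \<in> cls (res y)" using yA yz(4) by (simp_all add: cls_def)
    moreover have "res y \<in> A2" using res_A2 yA by blast
    ultimately show False using a yz unfolding single_in_def by blast
  qed
qed

lemma collapse_A2_image:
  assumes s: "\<sigma> \<subseteq> A" "x0 \<in> \<sigma>"
  shows "collapse A2 ` \<sigma> = insert x0 (first ` res ` (\<sigma> - {x0}))"
proof -
  have "collapse A2 ` \<sigma> = insert (collapse A2 x0) (collapse A2 ` (\<sigma> - {x0}))"
    using s by (metis image_insert insert_Diff)
  moreover have "collapse A2 ` (\<sigma> - {x0}) = first ` res ` (\<sigma> - {x0})"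
    unfolding image_image
  proof (rule image_cong[OF refl])
    fix y assume "y \<in> \<sigma> - {x0}"
    hence "y \<in> A'" using s A_eq by blast
    thus "collapse A2 y = first (res y)" using res_A2 by (simp add: collapse_def)
  qed
  ultimately show ?thesis using collapse_x0 by simp
qed

lemma lift_map_phi:
  assumes c: "c \<in> qcochains"
  shows "lift_map (phi L c) = collapse_map A2 c"
proof -
  have "lift_map (phi L c) = linmap A (\<lambda>\<sigma> \<tau>. \<Sum>\<rho>\<in>Pow A2. phicoef L \<sigma> \<rho> * lift_coef \<rho> \<tau>) c"
    unfolding phi_linmap by (rule linmap_comp)
  also have "\<dots> = collapse_map A2 c"
  proof (rule ext, rule linmap_cong)
    fix \<sigma> \<tau> assume s: "\<sigma> \<subseteq> A" "c \<sigma> \<noteq> 0"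
    have x0: "x0 \<in> \<sigma>" using c s by (auto simp: qcochains_def)
    define \<rho>0 where "\<rho>0 = res ` (\<sigma> - {x0})"
    have r0: "\<rho>0 \<in> Pow A2" using s A_eq unfolding \<rho>0_def A2_eq by blast
    have S: "(\<Sum>\<rho>\<in>Pow A2. phicoef L \<sigma> \<rho> * lift_coef \<rho> \<tau>) = phicoef L \<sigma> \<rho>0 * lift_coef \<rho>0 \<tau>"
      by (rule sum_eq_single[OF _ r0]) (simp_all add: phicoef_eq \<rho>0_def)
    show "(\<Sum>\<rho>\<in>Pow A2. phicoef L \<sigma> \<rho> * lift_coef \<rho> \<tau>) = collapse_coef A2 \<sigma> \<tau>"
    proof (cases "transversal \<sigma>")
      case True
      have gs: "\<forall>u\<in>A2. single_in \<sigma> u" using transversal_iff_single_in[OF s(1) x0] True by simp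
      have cr: "card \<rho>0 = card \<sigma> - 1"
        unfolding \<rho>0_def by (rule card_res_transversal(1)[OF True s(1)])
      have "phicoef L \<sigma> \<rho>0 * lift_coef \<rho>0 \<tau> = (if \<tau> = insert x0 (first ` \<rho>0) then 1 else 0)"
        using True r0 cr by (simp add: phicoef_eq lift_coef_def \<rho>0_def power_add[symmetric])
      moreover have "collapse_coef A2 \<sigma> \<tau> = (if \<tau> = insert x0 (first ` \<rho>0) then 1 else 0)"
        using gs x0 collapse_A2_image[OF s(1) x0] by (simp add: collapse_coef_def \<rho>0_def)
      ultimately show ?thesis using S by simp
    next
      case False
      have "\<not> (\<forall>u\<in>A2. single_in \<sigma> u)" using transversal_iff_single_in[OF s(1) x0] False by simp
      hence "collapse_coef A2 \<sigma> \<tau> = 0" by (simp add: collapse_coef_def)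
      moreover have "phicoef L \<sigma> \<rho>0 = 0" using False by (simp add: phicoef_eq)
      ultimately show ?thesis using S by simp
    qed
  qed
  finally show ?thesis .
qed

lemma lift_map_qcochains: "z \<in> cochains A2 \<Longrightarrow> lift_map z \<in> qcochains"
  using lift_coef_nonzeroD by (intro qcochainsI) (metis PowD linmap_nonzeroD)

lemma lift_map_qhcochains:
  assumes "z \<in> hcochains x0 A2 j"
  shows "lift_map z \<in> qhcochains (j + shift)"
proof (rule qhcochainsI)
  fix \<sigma> assume "lift_map z \<sigma> \<noteq> 0"
  then obtain \<tau> where t: "\<tau> \<subseteq> A2" "z \<tau> \<noteq> 0" "lift_coef \<tau> \<sigma> \<noteq> 0" using linmap_nonzeroD by blast
  have "sdeg x0 \<tau> = j" using assms t(2) by (simp add: hcochains_def)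
  thus "\<sigma> \<subseteq> A \<and> x0 \<in> \<sigma> \<and> sdeg UNIV \<sigma> = j + shift"
    using lift_coef_nonzeroD[OF t(1,3)] by simp
qed

lemma lift_map_dif:
  assumes z: "z \<in> cochains A2"
  shows "lift_map (dif (tA2 L) x0 z) = qdif (lift_map z)"
proof -
  obtain H where hH: "is_homotopy A2 H" using homotopy_exists by blast
  have pz: "lift_map z \<in> qcochains" using lift_map_qcochains[OF z] .
  have "lift_map (dif (tA2 L) x0 z) = lift_map (dif (tA2 L) x0 (phi L (lift_map z)))"
    using phi_lift_map[OF z] by simp
  also have "\<dots> = lift_map (phi L (dif L UNIV (lift_map z)))" by (simp add: phi_dif)
  also have "\<dots> = lift_map (phi L (qdif (lift_map z)))" by (simp add: phi_qdif)
  also have "\<dots> = collapse_map A2 (qdif (lift_map z))"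
    by (rule lift_map_phi[OF qdif_qcochains[OF pz]])
  also have "\<dots> = qdif (collapse_map A2 (lift_map z))" using qdif_collapse_map[OF hH pz] by simp
  also have "\<dots> = qdif (lift_map (phi L (lift_map z)))" using lift_map_phi[OF pz] by simp
  also have "\<dots> = qdif (lift_map z)" using phi_lift_map[OF z] by simp
  finally show ?thesis .
qed

end

section \<open>The induced map in cohomology\<close>

context deletion_restriction
begin

lemma subset_A': "\<tau> \<subseteq> A \<Longrightarrow> x0 \<notin> \<tau> \<Longrightarrow> \<tau> \<subseteq> A'"
  by (simp add: A_eq subset_insert)

lemma quotient_cocycle_coboundary:
  assumes cq: "cq \<in> qhcochains k" and closed: "qdif cq = (\<lambda>_. 0)"
    and b: "b \<in> hcochains x0 A2 (k - shift - 1)" and pb: "phi L cq = dif (tA2 L) x0 b"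
  shows "\<exists>a\<in>qhcochains (k - 1). qdif a = cq"
proof -
  obtain H where H: "is_homotopy A2 H" using homotopy_exists by blast
  have bc: "b \<in> cochains A2" using b by (simp add: hcochains_def)
  have "collapse_map A2 cq = lift_map (phi L cq)"
    using lift_map_phi[OF qhcochains_qcochains[OF cq]] by simp
  also have "\<dots> = qdif (lift_map b)" using pb lift_map_dif[OF bc] by simp
  finally have collapse: "collapse_map A2 cq = qdif (lift_map b)" .
  define a where "a \<tau> = H cq \<tau> + lift_map b \<tau>" for \<tau>
  have e: "(\<lambda>\<tau>. qdif (H cq) \<tau> + H (qdif cq) \<tau>) = (\<lambda>\<tau>. cq \<tau> - collapse_map A2 cq \<tau>)"
    using H qhcochains_qcochains[OF cq] by (simp add: is_homotopy_def)
  have H0: "H (qdif cq) = (\<lambda>_. 0)" using H closed by (simp add: is_homotopy_def)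
  have "qdif a = cq"
  proof
    fix \<tau>
    have "qdif (H cq) \<tau> = cq \<tau> - qdif (lift_map b) \<tau>"
      using fun_cong[OF e, of \<tau>] H0 collapse by simp
    then show "qdif a \<tau> = cq \<tau>" unfolding a_def linmap_add by simp
  qed
  moreover have "a \<in> qhcochains (k - 1)" unfolding a_def
  proof (rule qhcochains_add)
    show "H cq \<in> qhcochains (k - 1)" using H cq by (simp add: is_homotopy_def)
    show "lift_map b \<in> qhcochains (k - 1)" using lift_map_qhcochains[OF b] by simp
  qed
  ultimately show ?thesis by (intro bexI)
qed

lemma phi_cohomology_injective:
  assumes c: "c \<in> hcochains UNIV A k" and dc: "dif L UNIV c \<in> cochains A'"
    and b: "b \<in> hcochains x0 A2 (k - shift - 1)" and pb: "phi L c = dif (tA2 L) x0 b"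
  shows "\<exists>a\<in>hcochains UNIV A (k - 1). \<exists>e\<in>hcochains UNIV A' k. c = (\<lambda>\<sigma>. dif L UNIV a \<sigma> + e \<sigma>)"
proof -
  have "qdif c = (\<lambda>_. 0)"
    unfolding qdif_eq using dc x0_notin by (auto simp: restrict_x0_def cochains_def fun_eq_iff)
  then have "qdif (restrict_x0 c) = (\<lambda>_. 0)" by (simp only: qdif_restrict_x0)
  then obtain a where a: "a \<in> qhcochains (k - 1)" and da: "qdif a = restrict_x0 c"
    using quotient_cocycle_coboundary[OF restrict_x0_qhcochains[OF c] _ b] pb
    by (auto simp: phi_restrict_x0)
  have ah: "a \<in> hcochains UNIV A (k - 1)" using qhcochains_hcochains[OF a] .
  have dah: "dif L UNIV a \<in> hcochains UNIV A k" using dif_hcochains[OF ah] by simp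
  define e where "e \<sigma> = c \<sigma> - dif L UNIV a \<sigma>" for \<sigma>
  have "e \<in> hcochains UNIV A' k"
    unfolding hcochains_def cochains_def
  proof (intro CollectI conjI allI impI)
    fix \<sigma> assume ne: "e \<sigma> \<noteq> 0"
    then have "c \<sigma> \<noteq> 0 \<or> dif L UNIV a \<sigma> \<noteq> 0" by (auto simp: e_def)
    then have su: "\<sigma> \<subseteq> A \<and> sdeg UNIV \<sigma> = k"
      using c dah unfolding hcochains_def cochains_def by blast
    have "x0 \<notin> \<sigma>"
    proof
      assume "x0 \<in> \<sigma>"
      then have "dif L UNIV a \<sigma> = c \<sigma>"
        using fun_cong[OF da, of \<sigma>] by (simp add: qdif_eq restrict_x0_def)
      with ne show False by (simp add: e_def)
    qed
    then show "\<sigma> \<subseteq> A'" using su subset_A' by blast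
    show "sdeg UNIV \<sigma> = k" using su by simp
  qed
  moreover have "c = (\<lambda>\<sigma>. dif L UNIV a \<sigma> + e \<sigma>)" by (simp add: e_def)
  ultimately show ?thesis using ah by blast
qed

lemma phi_cohomology_surjective:
  assumes z: "z \<in> hcochains x0 A2 (k - shift)" and dz: "dif (tA2 L) x0 z = (\<lambda>_. 0)"
  shows "\<exists>c\<in>hcochains UNIV A k. \<exists>b\<in>hcochains x0 A2 (k - shift - 1).
    dif L UNIV c \<in> cochains A' \<and> phi L c = (\<lambda>\<tau>. z \<tau> + dif (tA2 L) x0 b \<tau>)"
proof -
  have zc: "z \<in> cochains A2" using z by (simp add: hcochains_def)
  have "lift_map z \<in> hcochains UNIV A k"
    using qhcochains_hcochains[OF lift_map_qhcochains[OF z]] by simp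
  moreover have "dif L UNIV (lift_map z) \<in> cochains A'"
    unfolding cochains_def
  proof (intro CollectI allI impI)
    fix \<tau> assume ne: "dif L UNIV (lift_map z) \<tau> \<noteq> 0"
    have "x0 \<notin> \<tau>"
    proof
      assume "x0 \<in> \<tau>"
      then have "dif L UNIV (lift_map z) \<tau> = lift_map (dif (tA2 L) x0 z) \<tau>"
        using fun_cong[OF lift_map_dif[OF zc], of \<tau>] by (simp add: qdif_eq restrict_x0_def)
      with ne dz show False by (simp add: linmap_zero)
    qed
    then show "\<tau> \<subseteq> A'" using dif_support[OF ne] subset_A' by blast
  qed
  moreover have "phi L (lift_map z) = (\<lambda>\<tau>. z \<tau> + dif (tA2 L) x0 (\<lambda>_. 0) \<tau>)"
    using phi_lift_map[OF zc] by (simp add: dif_zero)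
  moreover have "(\<lambda>_. 0) \<in> hcochains x0 A2 (k - shift - 1)"
    by (simp add: hcochains_def cochains_def)
  ultimately show ?thesis by blast
qed

end

theorem proposition3p5:
  fixes L :: "'n::finite csub list"
  defines "x0 \<equiv> hd L"
      and "A \<equiv> set L"
      and "A' \<equiv> set (tl L)"
      and "s \<equiv> 2 * int (ccodim UNIV (hd L)) - 1"
  assumes "L \<noteq> []" and "distinct L" and "is_arrangement (set L)"
      and contiguous: "\<And>i j k. 1 \<le> i \<Longrightarrow> i < j \<Longrightarrow> j < k \<Longrightarrow> k < length L \<Longrightarrow>
                 sim x0 (L ! i) (L ! k) \<Longrightarrow> sim x0 (L ! i) (L ! j)"
  shows
    \<comment> \<open>phi vanishes on D(A'), hence induces phi-bar on the quotient\<close>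
    "(\<forall>c\<in>cochains A'. phi L c = (\<lambda>_. 0))
     \<comment> \<open>commutes with the differentials\<close>
     \<and> (\<forall>c\<in>cochains A. phi L (dif L UNIV c) = dif (tA2 L) x0 (phi L c))
     \<comment> \<open>lowers degrees by 2 codim x0 - 1\<close>
     \<and> (\<forall>k. \<forall>c\<in>hcochains UNIV A k. phi L c \<in> hcochains x0 (set (tA2 L)) (k - s))
     \<comment> \<open>injective on cohomology H^k(D(A)/D(A')) \<rightarrow> H^(k-s)(D(tilde A''))\<close>
     \<and> (\<forall>k. \<forall>c\<in>hcochains UNIV A k.
          dif L UNIV c \<in> cochains A' \<and>
          (\<exists>b\<in>hcochains x0 (set (tA2 L)) (k - s - 1). phi L c = dif (tA2 L) x0 b)
          \<longrightarrow> (\<exists>a\<in>hcochains UNIV A (k - 1). \<exists>e\<in>hcochains UNIV A' k.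
                 c = (\<lambda>\<sigma>. dif L UNIV a \<sigma> + e \<sigma>)))
     \<comment> \<open>surjective on cohomology\<close>
     \<and> (\<forall>k. \<forall>z\<in>hcochains x0 (set (tA2 L)) (k - s).
          dif (tA2 L) x0 z = (\<lambda>_. 0)
          \<longrightarrow> (\<exists>c\<in>hcochains UNIV A k. \<exists>b\<in>hcochains x0 (set (tA2 L)) (k - s - 1).
                 dif L UNIV c \<in> cochains A' \<and>
                 phi L c = (\<lambda>\<tau>. z \<tau> + dif (tA2 L) x0 b \<tau>)))"
proof -
  interpret deletion_restriction L
    by (rule deletion_restriction.intro) (use assms(5,6) contiguous in \<open>simp_all add: x0_def\<close>)
  show ?thesis unfolding x0_def A_def A'_def s_def
  proof (intro conjI allI ballI impI)
    fix k c assume "c \<in> hcochains UNIV (set L) k"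
      and "dif L UNIV c \<in> cochains (set (tl L)) \<and>
        (\<exists>b\<in>hcochains (hd L) (set (tA2 L)) (k - (2 * int (ccodim UNIV (hd L)) - 1) - 1).
          phi L c = dif (tA2 L) (hd L) b)"
    then show "\<exists>a\<in>hcochains UNIV (set L) (k - 1). \<exists>e\<in>hcochains UNIV (set (tl L)) k.
        c = (\<lambda>\<sigma>. dif L UNIV a \<sigma> + e \<sigma>)"
      using phi_cohomology_injective by blast
  qed (use phi_vanishes_on_A' phi_dif phi_hcochains phi_cohomology_surjective in auto)
qed

end
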